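(* For every $f\in H^1_0(D)$, the nonlinear operator $A_f:\mathcal V\to\mathcal V^*$ satisfies: (1) $A_f$ is monotone in the sense ${}_{\mathcal V^*}\langle A_f(h_1)-A_f(h_2),h_1-h_2\rangle_{\mathcal V}\le0$ for all $h_1,h_2\in\mathcal V$; (2) $A_f$ is demicontinuous, i.e. $h\mapsto A_f(h)$ is continuous from $\mathcal V$ into $\mathcal V^*$ endowed with its weak topology; (3) there exist constants $C_1,C_2,C_3>0$ such that for all $h\in\mathcal V$, $${}_{\mathcal V^*}\langle A_f(h),h\rangle_{\mathcal V}\le -C_1\|h\|_{\mathcal V}^2+C_2,\qquad \|A_f(h)\|_{\mathcal V^*}\le C_3(\|h\|_{\mathcal V}+1).$$
   Context: $D\subset\mathbb{R}^d$ is a bounded connected domain with Lipschitz boundary. $V:\mathbb{R}\to\mathbb{R}$ is $C^2$, even, with $c_-\le V''\le c_+$ for constants $c_\pm>0$. $\sigma:\mathbb{R}^d\to\mathbb{R}$ is the surface tension associated with $V$: with $\Gamma_N=(\mathbb{Z}/N\mathbb{Z})^d$, $Z_N(u)=\int\exp(-\sum_{x\in\Gamma_N}\sum_{i=1}^dV(\phi(x+e_i)-\phi(x)+u_i))\prod_{x\ne0}d\phi(x)$ with $\phi(0)=0$, and $\sigma(u)=-\lim_{N\to\infty}N^{-d}\log(Z_N(u)/Z_N(0))$. It is known that $\sigma\in C^1$ and $c_-|u-v|^2\le(\nabla\sigma(u)-\nabla\sigma(v))\cdot(u-v)\le c_+|u-v|^2$ for all $u,v$. Let $\langle\cdot,\cdot\rangle$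 be the $H^1(D)^*$–$H^1(D)$ duality extending the $L^2(D)$ inner product. $\mathcal H=\{h\in H^1(D)^*;\langle h,1\rangle=0\}$ with inner product $(h_1,h_2)_{\mathcal H}=(\nabla Gh_1,\nabla Gh_2)_{L^2(D)}$, where $Gh\in H^1(D)$ is the unique $g$ with $\int_Dg=0$ and $(\nabla g,\nabla J)_{L^2(D)}=\langle h,J\rangle$ for all $J\in H^1(D)$. $\mathcal V=\{h\in H^1_0(D);\int_Dh=0\}$ (a closed subspace of $H^1_0(D)$ with its norm), with dual $\mathcal V^*$; triple $\mathcal V\subset\mathcal H\subset\mathcal V^*$ with ${}_{\mathcal V^*}\langle f,g\rangle_{\mathcal V}=(f,g)_{\mathcal H}$ for $f\in\mathcal H$. For $f\in H^1_0(D)$, $A_f:\mathcal V\to\mathcal V^*$ is $A_f(h)=-\Delta\,\mathrm{div}((\nabla\sigma)(\nabla h+\nabla f))$, meaning ${}_{\mathcal V^*}\langle A_f(h),g\rangle_{\mathcal V}=-((\nabla\sigma)(\nabla h+\nabla f),\nabla g)_{L^2(D)}$ for $h,g\in\mathcal V$. *)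

theory Defs
  imports "HOL-Analysis.Analysis"
begin

definition GamN :: "nat \<Rightarrow> ('n::finite \<Rightarrow> nat) set" where
  "GamN N = {x. \<forall>i. x i < N}"

definition shiftN :: "nat \<Rightarrow> 'n::finite \<Rightarrow> ('n \<Rightarrow> nat) \<Rightarrow> ('n \<Rightarrow> nat)" where
  "shiftN N i x = x(i := (x i + 1) mod N)"

text \<open>Partition function Z_N(u); phi is pinned by phi(0) = 0 and integrated over
  the remaining sites with Lebesgue measure.\<close>
definition ZN :: "(real \<Rightarrow> real) \<Rightarrow> nat \<Rightarrow> real^'n::finite \<Rightarrow> real" where
  "ZN V N u = (\<integral>\<phi>. exp (- (\<Sum>x\<in>GamN N. \<Sum>i\<in>UNIV.
        V ((\<phi>((\<lambda>_. 0) := 0)) (shiftN N i x) - (\<phi>((\<lambda>_. 0) := 0)) x + u $ i)))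
      \<partial>(PiM (GamN N - {\<lambda>_. 0}) (\<lambda>_. lborel)))"

definition surface_tension :: "(real \<Rightarrow> real) \<Rightarrow> real^'n::finite \<Rightarrow> real" where
  "surface_tension V u =
     - lim (\<lambda>N. ln (ZN V N u / ZN V N (0::real^'n)) / real N ^ CARD('n))"

definition partial :: "'n::finite \<Rightarrow> (real^'n \<Rightarrow> real) \<Rightarrow> real^'n \<Rightarrow> real" where
  "partial i f x = frechet_derivative f (at x) (axis i 1)"

definition vgrad :: "(real^'n::finite \<Rightarrow> real) \<Rightarrow> real^'n \<Rightarrow> real^'n" where
  "vgrad f x = (\<chi> i. partial i f x)"

fun iter_partial :: "'n::finite list \<Rightarrow> (real^'n \<Rightarrow> real) \<Rightarrow> real^'n \<Rightarrow> real" where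
  "iter_partial [] f = f"
| "iter_partial (i # is) f = partial i (iter_partial is f)"

definition smooth :: "(real^'n::finite \<Rightarrow> real) \<Rightarrow> bool" where
  "smooth f \<longleftrightarrow> (\<forall>is x. iter_partial is f differentiable (at x))"

definition test_fun :: "(real^'n::finite) set \<Rightarrow> (real^'n \<Rightarrow> real) \<Rightarrow> bool" where
  "test_fun D \<phi> \<longleftrightarrow> smooth \<phi> \<and> compact (closure {x. \<phi> x \<noteq> 0})
      \<and> closure {x. \<phi> x \<noteq> 0} \<subseteq> D"

definition lipschitz_boundary :: "(real^'n::finite) set \<Rightarrow> bool" where
  "lipschitz_boundary D \<longleftrightarrow> (\<forall>x\<in>frontier D. \<exists>r>0. \<exists>Q::real^'n^'n. \<exists>k. \<exists>\<gamma>::real^'n \<Rightarrow> real.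
      orthogonal_matrix Q \<and> (\<exists>L. L-lipschitz_on UNIV \<gamma>)
      \<and> (\<forall>z t. \<gamma> (z + t *\<^sub>R axis k 1) = \<gamma> z)
      \<and> D \<inter> ball x r = {y \<in> ball x r. (Q *v (y - x)) $ k < \<gamma> (Q *v (y - x))})"

text \<open>h0_grad D h G: h lies in H^1_0(D) (closure of test functions in the H^1 norm)
  and G is its weak gradient (on D).\<close>
definition h0_grad :: "(real^'n::finite) set \<Rightarrow> (real^'n \<Rightarrow> real) \<Rightarrow> (real^'n \<Rightarrow> real^'n) \<Rightarrow> bool" where
  "h0_grad D h G \<longleftrightarrow>
     set_borel_measurable lebesgue D h \<and> set_integrable lebesgue D (\<lambda>x. (h x)\<^sup>2)
   \<and> set_borel_measurable lebesgue D G \<and> set_integrable lebesgue D (\<lambda>x. (norm (G x))\<^sup>2)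
   \<and> (\<exists>\<phi>::nat \<Rightarrow> real^'n \<Rightarrow> real. (\<forall>n. test_fun D (\<phi> n))
        \<and> (\<lambda>n. LINT x:D|lebesgue. (\<phi> n x - h x)\<^sup>2) \<longlonglongrightarrow> 0
        \<and> (\<lambda>n. LINT x:D|lebesgue. (norm (vgrad (\<phi> n) x - G x))\<^sup>2) \<longlonglongrightarrow> 0)"

definition H10 :: "(real^'n::finite) set \<Rightarrow> (real^'n \<Rightarrow> real) \<Rightarrow> bool" where
  "H10 D h \<longleftrightarrow> (\<exists>G. h0_grad D h G)"

text \<open>Weak gradient (determined a.e. on D; only used inside integrals over D).\<close>
definition wgrad :: "(real^'n::finite) set \<Rightarrow> (real^'n \<Rightarrow> real) \<Rightarrow> real^'n \<Rightarrow> real^'n" where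
  "wgrad D h = (SOME G. h0_grad D h G)"

definition normV :: "(real^'n::finite) set \<Rightarrow> (real^'n \<Rightarrow> real) \<Rightarrow> real" where
  "normV D h = sqrt ((LINT x:D|lebesgue. (h x)\<^sup>2) + (LINT x:D|lebesgue. (norm (wgrad D h x))\<^sup>2))"

definition Vsp :: "(real^'n::finite) set \<Rightarrow> (real^'n \<Rightarrow> real) set" where
  "Vsp D = {h. H10 D h \<and> (LINT x:D|lebesgue. h x) = 0}"

text \<open>The duality pairing  V*< A_f(h), g >V = -((grad sigma)(grad h + grad f), grad g)_{L^2(D)}.\<close>
definition Apair :: "(real^'n::finite) set \<Rightarrow> (real^'n \<Rightarrow> real) \<Rightarrow> (real^'n \<Rightarrow> real)
    \<Rightarrow> (real^'n \<Rightarrow> real) \<Rightarrow> (real^'n \<Rightarrow> real) \<Rightarrow> real" where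
  "Apair D \<sigma> f h g =
     - (LINT x:D|lebesgue. vgrad \<sigma> (wgrad D h x + wgrad D f x) \<bullet> wgrad D g x)"

end

theory Submission
  imports Defs
begin

text \<open>
  The pairing is $-\int_D \nabla\sigma(\nabla h + \nabla f)\cdot\nabla g$, and only two properties
  of $\nabla\sigma$ enter: strong monotonicity with constant $c_-$, and the upper bound
  $c_+|u-v|^2$, which for a convex $C^1$ function forces $\nabla\sigma$ to be co-coercive and hence
  $2c_+$-Lipschitz. Monotonicity of $A_f$ is then pointwise monotonicity of $\nabla\sigma$, once the
  weak gradient of $h_1 - h_2$ is known to be $\nabla h_1 - \nabla h_2$ almost everywhere; this is
  uniqueness of weak gradients, i.e.\ closability of $\nabla$ on test functions, obtained by
  integrating by parts against the Laplacian. The Lipschitz bound makes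
  $h \mapsto \nabla\sigma(\nabla h + \nabla f)$ continuous from $H^1$ into $L^2$, which gives
  demicontinuity, and together with Cauchy--Schwarz the linear growth bound. Coercivity combines
  strong monotonicity, Young's inequality and the Poincar\'e inequality on the bounded domain,
  proved for test functions by integrating along coordinate lines and passed to $H^1_0(D)$ by
  density.
\<close>

section \<open>Gradients of convex functions with an upper curvature bound\<close>

lemma has_derivative_vgrad:
  fixes f :: "real^'n::finite \<Rightarrow> real"
  assumes "f differentiable (at x)"
  shows "(f has_derivative (\<lambda>w. vgrad f x \<bullet> w)) (at x)"
proof -
  let ?F = "frechet_derivative f (at x)"
  have F: "(f has_derivative ?F) (at x)" using assms frechet_derivative_works by blast
  have "?F w = vgrad f x \<bullet> w" for w
  proof -
    have "?F w = ?F (\<Sum>i\<in>UNIV. w$i *\<^sub>R axis i 1)"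
      using basis_expansion[of w] by (simp add: scalar_mult_eq_scaleR)
    also have "\<dots> = (\<Sum>i\<in>UNIV. w$i * ?F (axis i 1))"
      using has_derivative_linear[OF F] by (simp add: linear_sum linear_scale)
    also have "\<dots> = vgrad f x \<bullet> w"
      by (simp add: inner_vec_def vgrad_def partial_def mult.commute)
    finally show ?thesis .
  qed
  with F show ?thesis by (metis ext)
qed

lemma vgrad_inner_axis: "vgrad f x \<bullet> axis i 1 = partial i f x"
  by (simp add: vgrad_def inner_axis)

lemma has_real_derivative_along_line:
  fixes f :: "real^'n::finite \<Rightarrow> real"
  assumes "f differentiable (at (x + t *\<^sub>R e))"
  shows "((\<lambda>s. f (x + s *\<^sub>R e)) has_real_derivative (vgrad f (x + t *\<^sub>R e) \<bullet> e)) (at t)"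
proof -
  have "((\<lambda>s. x + s *\<^sub>R e) has_derivative (\<lambda>h. h *\<^sub>R e)) (at t)"
    by (auto intro!: derivative_eq_intros)
  from has_derivative_compose[OF this has_derivative_vgrad[OF assms]]
  show ?thesis by (simp add: has_field_derivative_def inner_scaleR_right mult_commute_abs)
qed

locale convex_upper_curvature =
  fixes \<sigma> :: "real^'n::finite \<Rightarrow> real" and c :: real
  assumes differentiable: "\<And>u. \<sigma> differentiable (at u)"
    and c_pos: "c > 0"
    and gradient_monotone: "\<And>u v. 0 \<le> (vgrad \<sigma> u - vgrad \<sigma> v) \<bullet> (u - v)"
    and gradient_upper: "\<And>u v. (vgrad \<sigma> u - vgrad \<sigma> v) \<bullet> (u - v) \<le> c * (norm (u - v))\<^sup>2"
begin

lemma mean_value_along_segment: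
  obtains \<xi> where "0 < \<xi>" "\<xi> < 1" "\<sigma> y - \<sigma> x = vgrad \<sigma> (x + \<xi> *\<^sub>R (y - x)) \<bullet> (y - x)"
proof (cases "x = y")
  case True
  then show ?thesis using that[of "1/2"] by simp
next
  case False
  have "\<And>s. ((\<lambda>s. \<sigma> (x + s *\<^sub>R (y - x))) has_real_derivative
      (vgrad \<sigma> (x + s *\<^sub>R (y - x)) \<bullet> (y - x))) (at s)"
    using has_real_derivative_along_line differentiable by blast
  from MVT2[of 0 1, OF _ this] obtain \<xi> where "0 < \<xi>" "\<xi> < 1"
    "\<sigma> (x + 1 *\<^sub>R (y - x)) - \<sigma> (x + 0 *\<^sub>R (y - x)) = (1 - 0) * (vgrad \<sigma> (x + \<xi> *\<^sub>R (y - x)) \<bullet> (y - x))"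
    by auto
  then show ?thesis using that by simp
qed

lemma quadratic_upper_bound: "\<sigma> y \<le> \<sigma> x + vgrad \<sigma> x \<bullet> (y - x) + c * (norm (y - x))\<^sup>2"
proof -
  obtain \<xi> where \<xi>: "0 < \<xi>" "\<xi> < 1" "\<sigma> y - \<sigma> x = vgrad \<sigma> (x + \<xi> *\<^sub>R (y - x)) \<bullet> (y - x)"
    by (rule mean_value_along_segment)
  let ?d = "y - x" and ?z = "x + \<xi> *\<^sub>R (y - x)"
  have "\<xi> * ((vgrad \<sigma> ?z - vgrad \<sigma> x) \<bullet> ?d) \<le> \<xi> * (\<xi> * c * (norm ?d)\<^sup>2)"
    using gradient_upper[of ?z x] \<xi> by (simp add: inner_scaleR_right power2_eq_square mult_ac)
  then have "(vgrad \<sigma> ?z - vgrad \<sigma> x) \<bullet> ?d \<le> \<xi> * c * (norm ?d)\<^sup>2"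
    using \<xi> by simp
  also have "\<dots> \<le> c * (norm ?d)\<^sup>2" using \<xi> c_pos by (simp add: mult_left_le_one_le)
  finally show ?thesis using \<xi> by (simp add: inner_diff_left)
qed

lemma linear_lower_bound: "\<sigma> x + vgrad \<sigma> x \<bullet> (y - x) \<le> \<sigma> y"
proof -
  obtain \<xi> where \<xi>: "0 < \<xi>" "\<xi> < 1" "\<sigma> y - \<sigma> x = vgrad \<sigma> (x + \<xi> *\<^sub>R (y - x)) \<bullet> (y - x)"
    by (rule mean_value_along_segment)
  let ?d = "y - x" and ?z = "x + \<xi> *\<^sub>R (y - x)"
  have "0 \<le> \<xi> * ((vgrad \<sigma> ?z - vgrad \<sigma> x) \<bullet> ?d)"
    using gradient_monotone[of ?z x] by (simp add: inner_scaleR_right)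
  then have "0 \<le> (vgrad \<sigma> ?z - vgrad \<sigma> x) \<bullet> ?d"
    using \<xi> by (simp add: zero_le_mult_iff)
  then show ?thesis using \<xi> by (simp add: inner_diff_left)
qed

lemma gradient_cocoercive:
  "(norm (vgrad \<sigma> y - vgrad \<sigma> x))\<^sup>2 / (4 * c) \<le> \<sigma> y - \<sigma> x - vgrad \<sigma> x \<bullet> (y - x)"
proof -
  define g where "g = vgrad \<sigma> y - vgrad \<sigma> x"
  define z where "z = y - (1 / (2 * c)) *\<^sub>R g"
  have "\<sigma> x + vgrad \<sigma> x \<bullet> (z - x) \<le> \<sigma> y + vgrad \<sigma> y \<bullet> (z - y) + c * (norm (z - y))\<^sup>2"
    using linear_lower_bound[of x z] quadratic_upper_bound[of z y] by linarith
  moreover have "vgrad \<sigma> y \<bullet> (z - y) - vgrad \<sigma> x \<bullet> (z - x) = - (vgrad \<sigma> x \<bullet> (y - x)) + g \<bullet> (z - y)"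
    by (simp add: g_def inner_diff_left inner_diff_right)
  moreover have "g \<bullet> (z - y) = - (norm g)\<^sup>2 / (2 * c)"
    by (simp add: z_def power2_norm_eq_inner)
  moreover have "c * (norm (z - y))\<^sup>2 = (norm g)\<^sup>2 / (4 * c)"
    using c_pos by (simp add: z_def power2_eq_square field_simps)
  moreover have "(norm g)\<^sup>2 / (2 * c) - (norm g)\<^sup>2 / (4 * c) = (norm g)\<^sup>2 / (4 * c)"
    using c_pos by (simp add: field_simps)
  ultimately show ?thesis by (simp add: g_def)
qed

lemma gradient_lipschitz: "(2 * c)-lipschitz_on UNIV (vgrad \<sigma>)"
proof (rule lipschitz_onI)
  fix u v :: "real^'n"
  let ?g = "vgrad \<sigma> u - vgrad \<sigma> v"
  have "(norm ?g)\<^sup>2 / (2 * c) \<le> ?g \<bullet> (u - v)"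
    using gradient_cocoercive[of u v] gradient_cocoercive[of v u] norm_minus_commute[of "vgrad \<sigma> v"]
    by (simp add: inner_diff_left inner_diff_right inner_commute field_simps)
  also have "\<dots> \<le> norm ?g * norm (u - v)" by (rule norm_cauchy_schwarz)
  finally have "(norm ?g)\<^sup>2 \<le> 2 * c * (norm ?g * norm (u - v))"
    using c_pos by (simp add: field_simps)
  then show "dist (vgrad \<sigma> u) (vgrad \<sigma> v) \<le> 2 * c * dist u v"
    using c_pos by (cases "?g = 0") (auto simp: dist_norm power2_eq_square)
qed (use c_pos in simp)

end

section \<open>Square-integrable functions on a measure space\<close>

lemma norm_diff_square_le:
  fixes x y :: "'a::real_normed_vector"
  shows "(norm (x - y))\<^sup>2 \<le> 2 * (norm x)\<^sup>2 + 2 * (norm y)\<^sup>2"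
proof -
  have "(norm (x - y))\<^sup>2 \<le> (norm x + norm y)\<^sup>2"
    by (rule power_mono[OF norm_triangle_ineq4]) simp
  also have "\<dots> \<le> 2 * (norm x)\<^sup>2 + 2 * (norm y)\<^sup>2"
    using sum_squares_bound[of "norm x" "norm y"] by (simp add: power2_sum)
  finally show ?thesis .
qed

lemma integrable_norm_diff_square:
  fixes f g :: "'a \<Rightarrow> 'b::euclidean_space"
  assumes [measurable]: "f \<in> borel_measurable M" "g \<in> borel_measurable M"
    and "integrable M (\<lambda>x. (norm (f x))\<^sup>2)" "integrable M (\<lambda>x. (norm (g x))\<^sup>2)"
  shows "integrable M (\<lambda>x. (norm (f x - g x))\<^sup>2)"
proof (rule Bochner_Integration.integrable_bound)
  show "integrable M (\<lambda>x. 2 * (norm (f x))\<^sup>2 + 2 * (norm (g x))\<^sup>2)"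
    using assms by simp
  show "AE x in M. norm ((norm (f x - g x))\<^sup>2) \<le> norm (2 * (norm (f x))\<^sup>2 + 2 * (norm (g x))\<^sup>2)"
    using norm_diff_square_le by (intro AE_I2) simp
qed measurable

lemma L2_Cauchy_Schwarz:
  fixes f g :: "'a \<Rightarrow> real"
  assumes [measurable]: "f \<in> borel_measurable M" "g \<in> borel_measurable M"
    and f2: "integrable M (\<lambda>x. (f x)\<^sup>2)" and g2: "integrable M (\<lambda>x. (g x)\<^sup>2)"
  shows "integrable M (\<lambda>x. f x * g x)"
    and "\<bar>\<integral>x. f x * g x \<partial>M\<bar> \<le> sqrt (\<integral>x. (f x)\<^sup>2 \<partial>M) * sqrt (\<integral>x. (g x)\<^sup>2 \<partial>M)"
proof -
  have prod_bound: "\<bar>f x * g x\<bar> \<le> (f x)\<^sup>2 + (g x)\<^sup>2" for x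
  proof -
    have "\<bar>f x * g x\<bar> \<le> 2 * \<bar>f x\<bar> * \<bar>g x\<bar>" by (simp add: abs_mult)
    also have "\<dots> \<le> \<bar>f x\<bar>\<^sup>2 + \<bar>g x\<bar>\<^sup>2" by (rule sum_squares_bound)
    finally show ?thesis by simp
  qed
  have "AE x in M. norm (f x * g x) \<le> norm ((f x)\<^sup>2 + (g x)\<^sup>2)"
    using prod_bound by (intro AE_I2) simp
  then show fg: "integrable M (\<lambda>x. f x * g x)"
    by (rule Bochner_Integration.integrable_bound[OF Bochner_Integration.integrable_add[OF f2 g2], rotated])
       measurable
  have L2_nn_integral: "(\<integral>\<^sup>+x. ennreal \<bar>h x\<bar> ^ 2 \<partial>M) = ennreal (\<integral>x. (h x)\<^sup>2 \<partial>M)"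
    if "integrable M (\<lambda>x. (h x)\<^sup>2)" for h :: "'a \<Rightarrow> real"
    using nn_integral_eq_integral[OF that] by (simp add: ennreal_power)
  have "(\<integral>\<^sup>+x. ennreal \<bar>f x\<bar> * ennreal \<bar>g x\<bar> \<partial>M) = ennreal (\<integral>x. \<bar>f x * g x\<bar> \<partial>M)"
    using nn_integral_eq_integral[OF integrable_abs[OF fg]] by (simp add: ennreal_mult[symmetric] abs_mult)
  moreover have "(\<integral>\<^sup>+x. ennreal \<bar>f x\<bar> * ennreal \<bar>g x\<bar> \<partial>M)\<^sup>2
      \<le> (\<integral>\<^sup>+x. ennreal \<bar>f x\<bar> ^ 2 \<partial>M) * (\<integral>\<^sup>+x. ennreal \<bar>g x\<bar> ^ 2 \<partial>M)"
    by (rule Cauchy_Schwarz_nn_integral) auto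
  ultimately have "ennreal (\<integral>x. \<bar>f x * g x\<bar> \<partial>M) ^ 2
      \<le> ennreal (\<integral>x. (f x)\<^sup>2 \<partial>M) * ennreal (\<integral>x. (g x)\<^sup>2 \<partial>M)"
    by (simp only: L2_nn_integral[OF f2] L2_nn_integral[OF g2])
  then have "ennreal ((\<integral>x. \<bar>f x * g x\<bar> \<partial>M)\<^sup>2) \<le> ennreal ((\<integral>x. (f x)\<^sup>2 \<partial>M) * (\<integral>x. (g x)\<^sup>2 \<partial>M))"
    by (simp only: ennreal_power[symmetric, OF integral_nonneg_AE] ennreal_mult[symmetric, OF integral_nonneg_AE integral_nonneg_AE] AE_I2 abs_ge_zero zero_le_power2)
  then have "(\<integral>x. \<bar>f x * g x\<bar> \<partial>M)\<^sup>2 \<le> (\<integral>x. (f x)\<^sup>2 \<partial>M) * (\<integral>x. (g x)\<^sup>2 \<partial>M)"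
    by (rule ennreal_le_iff[THEN iffD1, rotated]) simp
  then have "(\<integral>x. \<bar>f x * g x\<bar> \<partial>M) \<le> sqrt ((\<integral>x. (f x)\<^sup>2 \<partial>M) * (\<integral>x. (g x)\<^sup>2 \<partial>M))"
    by (rule real_le_rsqrt)
  then have "(\<integral>x. \<bar>f x * g x\<bar> \<partial>M) \<le> sqrt (\<integral>x. (f x)\<^sup>2 \<partial>M) * sqrt (\<integral>x. (g x)\<^sup>2 \<partial>M)"
    by (simp add: real_sqrt_mult)
  then show "\<bar>\<integral>x. f x * g x \<partial>M\<bar> \<le> sqrt (\<integral>x. (f x)\<^sup>2 \<partial>M) * sqrt (\<integral>x. (g x)\<^sup>2 \<partial>M)"
    by (rule order_trans[OF integral_abs_bound])
qed

lemma L2_Cauchy_Schwarz_inner: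
  fixes F G :: "'a \<Rightarrow> 'b::euclidean_space"
  assumes [measurable]: "F \<in> borel_measurable M" "G \<in> borel_measurable M"
    and F2: "integrable M (\<lambda>x. (norm (F x))\<^sup>2)" and G2: "integrable M (\<lambda>x. (norm (G x))\<^sup>2)"
  shows "integrable M (\<lambda>x. F x \<bullet> G x)"
    and "\<bar>\<integral>x. F x \<bullet> G x \<partial>M\<bar> \<le> sqrt (\<integral>x. (norm (F x))\<^sup>2 \<partial>M) * sqrt (\<integral>x. (norm (G x))\<^sup>2 \<partial>M)"
proof -
  have nF: "(\<lambda>x. norm (F x)) \<in> borel_measurable M" by measurable
  have nG: "(\<lambda>x. norm (G x)) \<in> borel_measurable M" by measurable
  note norms = L2_Cauchy_Schwarz[OF nF nG F2 G2]
  have "AE x in M. norm (F x \<bullet> G x) \<le> norm (norm (F x) * norm (G x))"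
    using Cauchy_Schwarz_ineq2 by (intro AE_I2) simp
  then show inner: "integrable M (\<lambda>x. F x \<bullet> G x)"
    by (rule Bochner_Integration.integrable_bound[OF norms(1), rotated]) measurable
  have "\<bar>\<integral>x. F x \<bullet> G x \<partial>M\<bar> \<le> (\<integral>x. \<bar>F x \<bullet> G x\<bar> \<partial>M)"
    by (rule integral_abs_bound)
  also have "\<dots> \<le> (\<integral>x. norm (F x) * norm (G x) \<partial>M)"
    by (rule integral_mono[OF integrable_abs[OF inner] norms(1) Cauchy_Schwarz_ineq2])
  also have "\<dots> \<le> sqrt (\<integral>x. (norm (F x))\<^sup>2 \<partial>M) * sqrt (\<integral>x. (norm (G x))\<^sup>2 \<partial>M)"
    using norms(2) by simp
  finally show "\<bar>\<integral>x. F x \<bullet> G x \<partial>M\<bar> \<le> sqrt (\<integral>x. (norm (F x))\<^sup>2 \<partial>M) * sqrt (\<integral>x. (norm (G x))\<^sup>2 \<partial>M)" .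
qed

lemma tendsto_integral_inner_L2:
  fixes a :: "nat \<Rightarrow> 'a \<Rightarrow> 'b::euclidean_space"
  assumes am [measurable]: "\<And>n. a n \<in> borel_measurable M"
    and bm [measurable]: "b \<in> borel_measurable M" and cm [measurable]: "c \<in> borel_measurable M"
    and a2: "\<And>n. integrable M (\<lambda>x. (norm (a n x))\<^sup>2)" and b2: "integrable M (\<lambda>x. (norm (b x))\<^sup>2)"
    and c2: "integrable M (\<lambda>x. (norm (c x))\<^sup>2)"
    and lim: "(\<lambda>n. \<integral>x. (norm (a n x - b x))\<^sup>2 \<partial>M) \<longlonglongrightarrow> 0"
  shows "(\<lambda>n. \<integral>x. a n x \<bullet> c x \<partial>M) \<longlonglongrightarrow> (\<integral>x. b x \<bullet> c x \<partial>M)"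
proof -
  let ?g = "\<lambda>n. sqrt (\<integral>x. (norm (a n x - b x))\<^sup>2 \<partial>M) * sqrt (\<integral>x. (norm (c x))\<^sup>2 \<partial>M)"
  have "\<bar>(\<integral>x. a n x \<bullet> c x \<partial>M) - (\<integral>x. b x \<bullet> c x \<partial>M)\<bar> \<le> ?g n" for n
  proof -
    have d: "(\<lambda>x. a n x - b x) \<in> borel_measurable M" by measurable
    have d2: "integrable M (\<lambda>x. (norm (a n x - b x))\<^sup>2)"
      by (rule integrable_norm_diff_square) (use a2 b2 in auto)
    have "(\<integral>x. a n x \<bullet> c x \<partial>M) - (\<integral>x. b x \<bullet> c x \<partial>M) = (\<integral>x. a n x \<bullet> c x - b x \<bullet> c x \<partial>M)"
      by (rule Bochner_Integration.integral_diff[symmetric, OF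
            L2_Cauchy_Schwarz_inner(1)[OF am cm a2 c2] L2_Cauchy_Schwarz_inner(1)[OF bm cm b2 c2]])
    also have "\<dots> = (\<integral>x. (a n x - b x) \<bullet> c x \<partial>M)"
      by (simp add: inner_diff_left)
    finally show ?thesis
      using L2_Cauchy_Schwarz_inner(2)[OF d cm d2 c2] by simp
  qed
  then have "\<forall>\<^sub>F n in sequentially. norm ((\<integral>x. a n x \<bullet> c x \<partial>M) - (\<integral>x. b x \<bullet> c x \<partial>M)) \<le> ?g n"
    by simp
  moreover have "?g \<longlonglongrightarrow> sqrt 0 * sqrt (\<integral>x. (norm (c x))\<^sup>2 \<partial>M)"
    by (intro tendsto_intros lim)
  then have "?g \<longlonglongrightarrow> 0" by simp
  ultimately have "(\<lambda>n. (\<integral>x. a n x \<bullet> c x \<partial>M) - (\<integral>x. b x \<bullet> c x \<partial>M)) \<longlonglongrightarrow> 0"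
    by (rule Lim_null_comparison)
  then show ?thesis by (simp add: Lim_null[symmetric])
qed

lemma tendsto_integral_norm_square_L2:
  fixes a :: "nat \<Rightarrow> 'a \<Rightarrow> 'b::euclidean_space"
  assumes am [measurable]: "\<And>n. a n \<in> borel_measurable M" and bm [measurable]: "b \<in> borel_measurable M"
    and a2: "\<And>n. integrable M (\<lambda>x. (norm (a n x))\<^sup>2)" and b2: "integrable M (\<lambda>x. (norm (b x))\<^sup>2)"
    and lim: "(\<lambda>n. \<integral>x. (norm (a n x - b x))\<^sup>2 \<partial>M) \<longlonglongrightarrow> 0"
  shows "(\<lambda>n. \<integral>x. (norm (a n x))\<^sup>2 \<partial>M) \<longlonglongrightarrow> (\<integral>x. (norm (b x))\<^sup>2 \<partial>M)"
proof -
  have dm: "(\<lambda>x. a n x - b x) \<in> borel_measurable M" for n by measurable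
  have d2: "integrable M (\<lambda>x. (norm (a n x - b x))\<^sup>2)" for n
    by (rule integrable_norm_diff_square[OF am bm a2 b2])
  have expand: "(\<integral>x. (norm (a n x))\<^sup>2 \<partial>M)
      = (\<integral>x. (norm (a n x - b x))\<^sup>2 \<partial>M) + 2 * (\<integral>x. (a n x - b x) \<bullet> b x \<partial>M) + (\<integral>x. (norm (b x))\<^sup>2 \<partial>M)"
    for n
  proof -
    have "(norm (a n x))\<^sup>2 = (norm (a n x - b x))\<^sup>2 + 2 * ((a n x - b x) \<bullet> b x) + (norm (b x))\<^sup>2" for x
      by (simp add: power2_norm_eq_inner inner_diff_left inner_diff_right inner_commute)
    then show ?thesis
      using d2 b2 L2_Cauchy_Schwarz_inner(1)[OF dm bm d2 b2] by simp
  qed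
  have "(\<lambda>n. \<integral>x. (a n x - b x) \<bullet> b x \<partial>M) \<longlonglongrightarrow> (\<integral>x. 0 \<bullet> b x \<partial>M)"
    by (rule tendsto_integral_inner_L2[OF dm _ bm d2 _ b2]) (use lim in auto)
  then have "(\<lambda>n. (\<integral>x. (norm (a n x - b x))\<^sup>2 \<partial>M) + 2 * (\<integral>x. (a n x - b x) \<bullet> b x \<partial>M)
      + (\<integral>x. (norm (b x))\<^sup>2 \<partial>M)) \<longlonglongrightarrow> 0 + 2 * 0 + (\<integral>x. (norm (b x))\<^sup>2 \<partial>M)"
    by (intro tendsto_intros lim) simp
  then show ?thesis by (simp add: expand)
qed

lemma tendsto_L2_diff:
  fixes a b :: "nat \<Rightarrow> 'a \<Rightarrow> 'b::euclidean_space"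
  assumes [measurable]: "\<And>n. a n \<in> borel_measurable M" "\<And>n. b n \<in> borel_measurable M"
      "a' \<in> borel_measurable M" "b' \<in> borel_measurable M"
    and a2: "\<And>n. integrable M (\<lambda>x. (norm (a n x))\<^sup>2)" "integrable M (\<lambda>x. (norm (a' x))\<^sup>2)"
    and b2: "\<And>n. integrable M (\<lambda>x. (norm (b n x))\<^sup>2)" "integrable M (\<lambda>x. (norm (b' x))\<^sup>2)"
    and a: "(\<lambda>n. \<integral>x. (norm (a n x - a' x))\<^sup>2 \<partial>M) \<longlonglongrightarrow> 0"
    and b: "(\<lambda>n. \<integral>x. (norm (b n x - b' x))\<^sup>2 \<partial>M) \<longlonglongrightarrow> 0"
  shows "(\<lambda>n. \<integral>x. (norm ((a n x - b n x) - (a' x - b' x)))\<^sup>2 \<partial>M) \<longlonglongrightarrow> 0"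
proof (rule tendsto_sandwich[of "\<lambda>_. 0" _ _
    "\<lambda>n. 2 * (\<integral>x. (norm (a n x - a' x))\<^sup>2 \<partial>M) + 2 * (\<integral>x. (norm (b n x - b' x))\<^sup>2 \<partial>M)"])
  have da: "integrable M (\<lambda>x. (norm (a n x - a' x))\<^sup>2)" for n
    by (rule integrable_norm_diff_square) (use a2 in auto)
  have db: "integrable M (\<lambda>x. (norm (b n x - b' x))\<^sup>2)" for n
    by (rule integrable_norm_diff_square) (use b2 in auto)
  have "(\<integral>x. (norm ((a n x - b n x) - (a' x - b' x)))\<^sup>2 \<partial>M)
      \<le> (\<integral>x. 2 * (norm (a n x - a' x))\<^sup>2 + 2 * (norm (b n x - b' x))\<^sup>2 \<partial>M)" for n
  proof (rule integral_mono')
    show "integrable M (\<lambda>x. 2 * (norm (a n x - a' x))\<^sup>2 + 2 * (norm (b n x - b' x))\<^sup>2)"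
      using da db by simp
    show "(norm ((a n x - b n x) - (a' x - b' x)))\<^sup>2 \<le> 2 * (norm (a n x - a' x))\<^sup>2 + 2 * (norm (b n x - b' x))\<^sup>2"
      for x using norm_diff_square_le[of "a n x - a' x" "b n x - b' x"] by (simp add: algebra_simps)
  qed simp
  also have "(\<integral>x. 2 * (norm (a n x - a' x))\<^sup>2 + 2 * (norm (b n x - b' x))\<^sup>2 \<partial>M)
      = 2 * (\<integral>x. (norm (a n x - a' x))\<^sup>2 \<partial>M) + 2 * (\<integral>x. (norm (b n x - b' x))\<^sup>2 \<partial>M)" for n
    using da db by simp
  finally show "\<forall>\<^sub>F n in sequentially. (\<integral>x. (norm ((a n x - b n x) - (a' x - b' x)))\<^sup>2 \<partial>M)
      \<le> 2 * (\<integral>x. (norm (a n x - a' x))\<^sup>2 \<partial>M) + 2 * (\<integral>x. (norm (b n x - b' x))\<^sup>2 \<partial>M)"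
    by simp
  show "(\<lambda>n. 2 * (\<integral>x. (norm (a n x - a' x))\<^sup>2 \<partial>M) + 2 * (\<integral>x. (norm (b n x - b' x))\<^sup>2 \<partial>M)) \<longlonglongrightarrow> 0"
    using tendsto_add[OF tendsto_mult_right_zero[OF a] tendsto_mult_right_zero[OF b]] by simp
qed auto

lemma L2_lipschitz_comp:
  fixes F :: "'b::euclidean_space \<Rightarrow> 'c::euclidean_space" and A :: "'a \<Rightarrow> 'b"
  assumes F: "L-lipschitz_on UNIV F" and M: "finite_measure M"
    and [measurable]: "A \<in> borel_measurable M" and A2: "integrable M (\<lambda>x. (norm (A x))\<^sup>2)"
  shows "(\<lambda>x. F (A x)) \<in> borel_measurable M"
    and "integrable M (\<lambda>x. (norm (F (A x)))\<^sup>2)"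
    and "(\<integral>x. (norm (F (A x)))\<^sup>2 \<partial>M)
      \<le> 2 * (norm (F 0))\<^sup>2 * measure M (space M) + 2 * L\<^sup>2 * (\<integral>x. (norm (A x))\<^sup>2 \<partial>M)"
proof -
  show FA: "(\<lambda>x. F (A x)) \<in> borel_measurable M"
    using borel_measurable_continuous_onI[OF lipschitz_on_continuous_on[OF F]] by measurable
  have growth: "(norm (F a))\<^sup>2 \<le> 2 * (norm (F 0))\<^sup>2 + 2 * L\<^sup>2 * (norm a)\<^sup>2" for a
  proof -
    have "norm (F a) \<le> norm (F 0) + L * norm a"
      using norm_triangle_sub[of "F a" "F 0"] lipschitz_on_normD[OF F, of a 0] by simp
    then have "(norm (F a))\<^sup>2 \<le> (norm (F 0) + L * norm a)\<^sup>2" by (simp add: power_mono)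
    also have "\<dots> \<le> 2 * (norm (F 0))\<^sup>2 + 2 * (L * norm a)\<^sup>2"
      using norm_diff_square_le[of "norm (F 0)" "- L * norm a"] by simp
    finally show ?thesis by (simp add: power_mult_distrib)
  qed
  have bound: "integrable M (\<lambda>x. 2 * (norm (F 0))\<^sup>2 + 2 * L\<^sup>2 * (norm (A x))\<^sup>2)"
    by (intro Bochner_Integration.integrable_add integrable_mult_right A2 finite_measure.integrable_const[OF M])
  show F2: "integrable M (\<lambda>x. (norm (F (A x)))\<^sup>2)"
    by (rule Bochner_Integration.integrable_bound[OF bound]) (use FA growth in \<open>auto intro!: AE_I2\<close>)
  have "(\<integral>x. (norm (F (A x)))\<^sup>2 \<partial>M) \<le> (\<integral>x. 2 * (norm (F 0))\<^sup>2 + 2 * L\<^sup>2 * (norm (A x))\<^sup>2 \<partial>M)"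
    by (rule integral_mono[OF F2 bound growth])
  also have "\<dots> = 2 * (norm (F 0))\<^sup>2 * measure M (space M) + 2 * L\<^sup>2 * (\<integral>x. (norm (A x))\<^sup>2 \<partial>M)"
    using Bochner_Integration.integral_add[OF finite_measure.integrable_const[OF M] integrable_mult_right[OF A2]]
    by simp
  finally show "(\<integral>x. (norm (F (A x)))\<^sup>2 \<partial>M)
      \<le> 2 * (norm (F 0))\<^sup>2 * measure M (space M) + 2 * L\<^sup>2 * (\<integral>x. (norm (A x))\<^sup>2 \<partial>M)" .
qed

section \<open>Continuously differentiable functions with compact support\<close>

lemma partial_eq_0_if_vanishing_on_open:
  fixes f :: "real^'n::finite \<Rightarrow> real"
  assumes "open U" "\<And>y. y \<in> U \<Longrightarrow> f y = 0" "x \<in> U"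
  shows "partial i f x = 0"
proof -
  have "(f has_derivative (\<lambda>_. 0)) (at x)"
    by (rule has_derivative_transform_within_open[OF has_derivative_const assms(1,3)])
       (use assms(2) in auto)
  then show ?thesis by (simp add: partial_def frechet_derivative_at[symmetric])
qed

lemma partial_eq_0_outside_compact:
  fixes f :: "real^'n::finite \<Rightarrow> real"
  assumes "compact K" "\<And>y. y \<notin> K \<Longrightarrow> f y = 0" "x \<notin> K"
  shows "partial i f x = 0"
  using partial_eq_0_if_vanishing_on_open[of "- K" f x i] assms compact_imp_closed by blast

lemma continuous_on_if_differentiable:
  fixes f :: "'a::real_normed_vector \<Rightarrow> 'b::real_normed_vector"
  assumes "\<And>x. f differentiable (at x)"
  shows "continuous_on UNIV f"
  using assms by (intro differentiable_imp_continuous_on differentiable_at_imp_differentiable_on) auto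

lemma integrable_lborel_compact_support:
  fixes f :: "'a::euclidean_space \<Rightarrow> 'b::{banach, second_countable_topology}"
  assumes "continuous_on UNIV f" "compact K" "\<And>x. x \<notin> K \<Longrightarrow> f x = 0"
  shows "integrable lborel f"
proof -
  have "integrable lborel (\<lambda>x. indicator K x *\<^sub>R f x)"
    by (rule borel_integrable_compact[OF assms(2) continuous_on_subset[OF assms(1)]]) simp
  moreover have "(\<lambda>x. indicator K x *\<^sub>R f x) = f"
    using assms(3) by (auto simp: fun_eq_iff indicator_def)
  ultimately show ?thesis by simp
qed

lemma partial_diff:
  fixes f g :: "real^'n::finite \<Rightarrow> real"
  assumes "f differentiable (at x)" "g differentiable (at x)"
  shows "partial i (\<lambda>y. f y - g y) x = partial i f x - partial i g x"
proof -
  have "((\<lambda>y. f y - g y) has_derivative (\<lambda>w. vgrad f x \<bullet> w - vgrad g x \<bullet> w)) (at x)"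
    using has_derivative_vgrad[OF assms(1)] has_derivative_vgrad[OF assms(2)] by (rule has_derivative_diff)
  then show ?thesis by (simp add: partial_def frechet_derivative_at[symmetric] vgrad_inner_axis)
qed

lemma partial_mult:
  fixes f g :: "real^'n::finite \<Rightarrow> real"
  assumes "f differentiable (at x)" "g differentiable (at x)"
  shows "partial i (\<lambda>y. f y * g y) x = partial i f x * g x + f x * partial i g x"
    and "(\<lambda>y. f y * g y) differentiable (at x)"
proof -
  have D: "((\<lambda>y. f y * g y) has_derivative (\<lambda>w. f x * (vgrad g x \<bullet> w) + (vgrad f x \<bullet> w) * g x)) (at x)"
    using has_derivative_vgrad[OF assms(1)] has_derivative_vgrad[OF assms(2)] by (rule has_derivative_mult)
  then show "partial i (\<lambda>y. f y * g y) x = partial i f x * g x + f x * partial i g x"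
    by (simp add: partial_def frechet_derivative_at[symmetric] vgrad_inner_axis)
  show "(\<lambda>y. f y * g y) differentiable (at x)" using D by (auto simp: differentiable_def)
qed

lemma vgrad_diff:
  assumes "f differentiable (at x)" "g differentiable (at x)"
  shows "vgrad (\<lambda>y. f y - g y) x = vgrad f x - vgrad g x"
  using partial_diff[OF assms] by (simp add: vgrad_def vec_eq_iff)

lemma vgrad_eq_0_outside_compact:
  assumes "compact K" "\<And>y. y \<notin> K \<Longrightarrow> f y = 0" "x \<notin> K"
  shows "vgrad f x = 0"
  using partial_eq_0_outside_compact[OF assms] by (simp add: vgrad_def vec_eq_iff)

lemma iter_partial_snoc: "iter_partial is (partial i f) = iter_partial (is @ [i]) f"
  by (induction "is") auto

lemma smooth_partial: "smooth f \<Longrightarrow> smooth (partial i f)"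
  unfolding smooth_def by (simp add: iter_partial_snoc)

lemma smooth_imp_differentiable: "smooth f \<Longrightarrow> f differentiable (at x)"
  unfolding smooth_def by (metis iter_partial.simps(1))

lemma smooth_imp_continuous: "smooth f \<Longrightarrow> continuous_on UNIV f"
  by (rule continuous_on_if_differentiable[OF smooth_imp_differentiable])

lemma smooth_imp_continuous_vgrad: "smooth f \<Longrightarrow> continuous_on UNIV (vgrad f)"
  unfolding vgrad_def by (intro continuous_on_vec_lambda smooth_imp_continuous smooth_partial)

lemma iter_partial_diff:
  assumes "smooth f" "smooth g"
  shows "iter_partial is (\<lambda>y. f y - g y) = (\<lambda>y. iter_partial is f y - iter_partial is g y)"
proof (induction "is")
  case (Cons i "is")
  have "iter_partial (i # is) (\<lambda>y. f y - g y) = partial i (\<lambda>y. iter_partial is f y - iter_partial is g y)"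
    using Cons by simp
  also have "\<dots> = (\<lambda>y. partial i (iter_partial is f) y - partial i (iter_partial is g) y)"
    using assms unfolding smooth_def by (intro ext partial_diff) auto
  finally show ?case by simp
qed simp

lemma smooth_diff: "smooth f \<Longrightarrow> smooth g \<Longrightarrow> smooth (\<lambda>y. f y - g y)"
  unfolding smooth_def[of "\<lambda>y. f y - g y"] iter_partial_diff
  by (auto simp: smooth_def intro!: differentiable_diff)

lemma test_fun_vanishes:
  "test_fun D \<phi> \<Longrightarrow> x \<notin> closure {x. \<phi> x \<noteq> 0} \<Longrightarrow> \<phi> x = 0"
  using closure_subset[of "{x. \<phi> x \<noteq> 0}"] by blast

lemma test_fun_diff:
  assumes "test_fun D f" "test_fun D g"
  shows "test_fun D (\<lambda>y. f y - g y)"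
proof -
  let ?A = "closure {x. f x \<noteq> 0}" and ?B = "closure {x. g x \<noteq> 0}" and ?C = "closure {x. f x - g x \<noteq> 0}"
  have "?C \<subseteq> closure ({x. f x \<noteq> 0} \<union> {x. g x \<noteq> 0})" by (rule closure_mono) auto
  then have sub: "?C \<subseteq> ?A \<union> ?B" by (simp add: closure_Un)
  have "compact (?A \<union> ?B)" using assms by (auto simp: test_fun_def)
  then have "compact ((?A \<union> ?B) \<inter> ?C)" by (rule compact_Int_closed) simp
  moreover have "(?A \<union> ?B) \<inter> ?C = ?C" using sub by blast
  ultimately have "compact ?C" by simp
  moreover have "?C \<subseteq> D" using sub assms by (auto simp: test_fun_def)
  moreover have "smooth (\<lambda>y. f y - g y)"
    using assms by (intro smooth_diff) (auto simp: test_fun_def)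
  ultimately show ?thesis unfolding test_fun_def by blast
qed

lemma integral_lborel_translate:
  fixes w :: "'a::euclidean_space \<Rightarrow> real"
  assumes "w \<in> borel_measurable borel"
  shows "(\<integral>x. w (x + c) \<partial>lborel) = integral\<^sup>L lborel w"
proof -
  have "integral\<^sup>L lborel w = integral\<^sup>L (distr lborel borel ((+) c)) w"
    by (simp add: lborel_distr_plus)
  also have "\<dots> = (\<integral>x. w (c + x) \<partial>lborel)"
    by (rule integral_distr) (use assms in auto)
  finally show ?thesis by (simp add: add.commute)
qed

lemma integrable_along_segments:
  fixes w :: "'a::euclidean_space \<Rightarrow> real"
  assumes w: "continuous_on UNIV w" and K: "compact K" and w0: "\<And>x. x \<notin> K \<Longrightarrow> w x = 0"
  shows "integrable (lborel \<Otimes>\<^sub>M lborel) (\<lambda>(x, t::real). indicator {a..b} t * w (x + t *\<^sub>R e))"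
proof -
  define S where "S = (\<lambda>(y, t). (y - t *\<^sub>R e, t)) ` (K \<times> {a..b})"
  have "compact S" unfolding S_def
    by (intro compact_continuous_image compact_Times K compact_Icc) (auto intro!: continuous_intros simp: case_prod_unfold)
  then have "integrable lborel (\<lambda>p. indicator S p *\<^sub>R w (fst p + snd p *\<^sub>R e))"
    by (rule borel_integrable_compact) (auto intro!: continuous_on_compose2[OF w] continuous_intros)
  moreover have "(\<lambda>p. indicator S p *\<^sub>R w (fst p + snd p *\<^sub>R e))
      = (\<lambda>p. indicator {a..b} (snd p) * w (fst p + snd p *\<^sub>R e))"
  proof (rule ext)
    fix p :: "'a \<times> real"
    show "indicator S p *\<^sub>R w (fst p + snd p *\<^sub>R e) = indicator {a..b} (snd p) * w (fst p + snd p *\<^sub>R e)"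
    proof (cases "snd p \<in> {a..b} \<and> fst p + snd p *\<^sub>R e \<in> K")
      case True
      then have "p \<in> S" unfolding S_def by (auto intro!: image_eqI[of _ _ "(fst p + snd p *\<^sub>R e, snd p)"])
      then show ?thesis using True by simp
    next
      case False
      moreover have "snd p \<in> {a..b}" if "p \<in> S" using that by (auto simp: S_def)
      ultimately show ?thesis using w0 by (auto simp: indicator_def)
    qed
  qed
  ultimately show ?thesis by (simp add: lborel_prod case_prod_unfold)
qed

lemma integral_along_segments:
  fixes w :: "'a::euclidean_space \<Rightarrow> real"
  assumes w: "continuous_on UNIV w" and K: "compact K" and w0: "\<And>x. x \<notin> K \<Longrightarrow> w x = 0"
    and ab: "a \<le> b"
  shows "integrable lborel (\<lambda>x. \<integral>t. indicator {a..b} t * w (x + t *\<^sub>R e) \<partial>lborel)"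
    and "(\<integral>x. (\<integral>t. indicator {a..b} t * w (x + t *\<^sub>R e) \<partial>lborel) \<partial>lborel) = (b - a) * integral\<^sup>L lborel w"
proof -
  note int = integrable_along_segments[OF w K w0, of a b e]
  show "integrable lborel (\<lambda>x. \<integral>t. indicator {a..b} t * w (x + t *\<^sub>R e) \<partial>lborel)"
    using lborel_pair.integrable_fst'[OF int] by simp
  have "(\<integral>x. (\<integral>t. indicator {a..b} t * w (x + t *\<^sub>R e) \<partial>lborel) \<partial>lborel)
      = (\<integral>t. (\<integral>x. indicator {a..b} t * w (x + t *\<^sub>R e) \<partial>lborel) \<partial>lborel)"
    using lborel_pair.Fubini_integral[OF int] by simp
  also have "\<dots> = (\<integral>t. indicator {a..b} t * integral\<^sup>L lborel w \<partial>lborel)"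
    by (simp add: integral_lborel_translate[OF borel_measurable_continuous_onI[OF w]])
  also have "\<dots> = (b - a) * integral\<^sup>L lborel w" using ab by simp
  finally show "(\<integral>x. (\<integral>t. indicator {a..b} t * w (x + t *\<^sub>R e) \<partial>lborel) \<partial>lborel) = (b - a) * integral\<^sup>L lborel w" .
qed

lemma integral_partial_along_segment:
  fixes u :: "real^'n::finite \<Rightarrow> real"
  assumes u: "\<And>x. u differentiable (at x)" and du: "continuous_on UNIV (partial i u)" and ab: "a \<le> b"
  shows "(\<integral>t. indicator {a..b} t * partial i u (x + t *\<^sub>R axis i 1) \<partial>lborel)
       = u (x + b *\<^sub>R axis i 1) - u (x + a *\<^sub>R axis i 1)"
proof -
  let ?e = "axis i 1 :: real^'n"
  have "(\<integral>t. indicator {a..b} t *\<^sub>R partial i u (x + t *\<^sub>R ?e) \<partial>lborel)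
       = u (x + b *\<^sub>R ?e) - u (x + a *\<^sub>R ?e)"
  proof (rule integral_FTC_atLeastAtMost[OF ab])
    fix t
    from has_real_derivative_along_line[of u x t ?e, OF u]
    have "((\<lambda>s. u (x + s *\<^sub>R ?e)) has_real_derivative partial i u (x + t *\<^sub>R ?e)) (at t)"
      by (simp add: vgrad_inner_axis)
    then show "((\<lambda>s. u (x + s *\<^sub>R ?e)) has_vector_derivative partial i u (x + t *\<^sub>R ?e)) (at t within {a..b})"
      by (simp add: has_real_derivative_iff_has_vector_derivative has_vector_derivative_at_within)
  next
    show "continuous_on {a..b} (\<lambda>t. partial i u (x + t *\<^sub>R ?e))"
      by (intro continuous_on_compose2[OF du] continuous_intros) auto
  qed
  then show ?thesis by simp
qed

lemma integral_partial_eq_0: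
  fixes u :: "real^'n::finite \<Rightarrow> real"
  assumes u: "\<And>x. u differentiable (at x)" and du: "continuous_on UNIV (partial i u)"
    and K: "compact K" and u0: "\<And>x. x \<notin> K \<Longrightarrow> u x = 0"
  shows "integral\<^sup>L lborel (partial i u) = 0"
proof -
  let ?e = "axis i 1 :: real^'n"
  have cu: "continuous_on UNIV u" using u by (rule continuous_on_if_differentiable)
  have shifted: "integrable lborel (\<lambda>x. u (x + ?e))"
  proof (rule integrable_lborel_compact_support)
    show "continuous_on UNIV (\<lambda>x. u (x + ?e))"
      by (intro continuous_on_compose2[OF cu] continuous_intros) auto
    show "compact ((+) (- ?e) ` K)" using K by (rule compact_translation)
    show "u (x + ?e) = 0" if "x \<notin> (+) (- ?e) ` K" for x
      using that u0[of "x + ?e"] by (metis add_minus_cancel image_eqI add.commute)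
  qed
  have "(1 - 0) * integral\<^sup>L lborel (partial i u)
      = (\<integral>x. (\<integral>t. indicator {0..1} t * partial i u (x + t *\<^sub>R ?e) \<partial>lborel) \<partial>lborel)"
    using integral_along_segments(2)[OF du K partial_eq_0_outside_compact[OF K u0], of 0 1 ?e] by simp
  also have "\<dots> = (\<integral>x. u (x + ?e) - u x \<partial>lborel)"
    using integral_partial_along_segment[OF u du, of 0 1] by simp
  also have "\<dots> = (\<integral>x. u (x + ?e) \<partial>lborel) - integral\<^sup>L lborel u"
    by (rule Bochner_Integration.integral_diff[OF shifted integrable_lborel_compact_support[OF cu K u0]])
  also have "\<dots> = 0"
    using integral_lborel_translate[OF borel_measurable_continuous_onI[OF cu]] by simp
  finally show ?thesis by simp
qed

lemma integration_by_parts_partial: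
  fixes f g :: "real^'n::finite \<Rightarrow> real"
  assumes f: "\<And>x. f differentiable (at x)" and g: "\<And>x. g differentiable (at x)"
    and df: "continuous_on UNIV (partial i f)" and dg: "continuous_on UNIV (partial i g)"
    and K: "compact K" and f0: "\<And>x. x \<notin> K \<Longrightarrow> f x = 0"
  shows "(\<integral>x. partial i f x * g x \<partial>lborel) = - (\<integral>x. f x * partial i g x \<partial>lborel)"
proof -
  let ?u = "\<lambda>y. f y * g y"
  have pu: "partial i ?u = (\<lambda>x. partial i f x * g x + f x * partial i g x)"
    using partial_mult(1)[OF f g] by (intro ext) auto
  have cf: "continuous_on UNIV f" and cg: "continuous_on UNIV g"
    using f g by (auto intro: continuous_on_if_differentiable)
  have df0: "\<And>x. x \<notin> K \<Longrightarrow> partial i f x = 0" using partial_eq_0_outside_compact[OF K f0] .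
  have i1: "integrable lborel (\<lambda>x. partial i f x * g x)"
    by (rule integrable_lborel_compact_support[OF _ K]) (use df cg df0 in \<open>auto intro!: continuous_intros\<close>)
  have i2: "integrable lborel (\<lambda>x. f x * partial i g x)"
    by (rule integrable_lborel_compact_support[OF _ K]) (use cf dg f0 in \<open>auto intro!: continuous_intros\<close>)
  have "integral\<^sup>L lborel (partial i ?u) = 0"
  proof (rule integral_partial_eq_0[OF partial_mult(2)[OF f g] _ K])
    show "continuous_on UNIV (partial i ?u)" unfolding pu using df dg cf cg by (intro continuous_intros)
  qed (use f0 in auto)
  then have "(\<integral>x. partial i f x * g x \<partial>lborel) + (\<integral>x. f x * partial i g x \<partial>lborel) = 0"
    unfolding pu using i1 i2 by simp
  then show ?thesis by linarith
qed

lemma square_le_integral_partial_along_segment: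
  fixes f :: "real^'n::finite \<Rightarrow> real"
  assumes f: "\<And>x. f differentiable (at x)" and df: "continuous_on UNIV (partial i f)"
    and l: "l \<ge> 0" and end0: "f (x + l *\<^sub>R axis i 1) = 0"
  shows "(f x)\<^sup>2 \<le> l * (\<integral>t. indicator {0..l} t * (partial i f (x + t *\<^sub>R axis i 1))\<^sup>2 \<partial>lborel)"
proof -
  let ?e = "axis i 1 :: real^'n"
  let ?ind = "\<lambda>t. indicator {0..l} t :: real"
  let ?g = "\<lambda>t. indicator {0..l} t * partial i f (x + t *\<^sub>R ?e)"
  let ?J = "\<integral>t. indicator {0..l} t * (partial i f (x + t *\<^sub>R ?e))\<^sup>2 \<partial>lborel"
  have I: "(\<integral>t. ?g t \<partial>lborel) = - f x"
    using integral_partial_along_segment[OF f df l, of x] end0 by simp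
  have dfx: "continuous_on UNIV (\<lambda>t. partial i f (x + t *\<^sub>R ?e))"
    by (intro continuous_on_compose2[OF df] continuous_intros) auto
  have ind2: "(\<lambda>t. (?ind t)\<^sup>2) = ?ind" by (auto simp: fun_eq_iff indicator_def)
  have g2: "(\<lambda>t. (?g t)\<^sup>2) = (\<lambda>t. indicator {0..l} t *\<^sub>R (partial i f (x + t *\<^sub>R ?e))\<^sup>2)"
    by (auto simp: fun_eq_iff indicator_def)
  have "integrable lborel (\<lambda>t. (?ind t)\<^sup>2)"
    unfolding ind2 by (rule integrable_real_indicator) (auto simp: emeasure_lborel_Icc_eq)
  moreover have "integrable lborel (\<lambda>t. (?g t)\<^sup>2)" unfolding g2
    by (rule borel_integrable_compact) (auto intro!: continuous_intros continuous_on_subset[OF dfx])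
  moreover have "?g \<in> borel_measurable lborel"
    using borel_measurable_continuous_onI[OF dfx] by simp
  ultimately have "\<bar>\<integral>t. ?ind t * ?g t \<partial>lborel\<bar> \<le> sqrt (\<integral>t. (?ind t)\<^sup>2 \<partial>lborel) * sqrt (\<integral>t. (?g t)\<^sup>2 \<partial>lborel)"
    by (intro L2_Cauchy_Schwarz(2)) auto
  moreover have "(\<lambda>t. ?ind t * ?g t) = ?g" by (auto simp: fun_eq_iff indicator_def)
  ultimately have "\<bar>f x\<bar> \<le> sqrt l * sqrt ?J"
    using I l unfolding ind2 g2 by simp
  then have "\<bar>f x\<bar>\<^sup>2 \<le> (sqrt l * sqrt ?J)\<^sup>2" by (rule power_mono) simp
  also have "\<dots> = l * ?J" using l by (simp add: power_mult_distrib integral_nonneg_AE)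
  finally show ?thesis by simp
qed

lemma Poincare_inequality_compact_support:
  fixes f :: "real^'n::finite \<Rightarrow> real"
  assumes f: "\<And>x. f differentiable (at x)" and df: "continuous_on UNIV (partial i f)"
    and K: "compact K" and f0: "\<And>x. x \<notin> K \<Longrightarrow> f x = 0" and R: "R > 0" and KR: "K \<subseteq> ball 0 R"
  shows "(\<integral>x. (f x)\<^sup>2 \<partial>lborel) \<le> (2 * R)\<^sup>2 * (\<integral>x. (partial i f x)\<^sup>2 \<partial>lborel)"
proof -
  let ?e = "axis i 1 :: real^'n"
  let ?J = "\<lambda>x. \<integral>t. indicator {0..2*R} t * (partial i f (x + t *\<^sub>R ?e))\<^sup>2 \<partial>lborel"
  have df2: "continuous_on UNIV (\<lambda>x. (partial i f x)\<^sup>2)" using df by (intro continuous_intros)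
  have df2_0: "\<And>x. x \<notin> K \<Longrightarrow> (partial i f x)\<^sup>2 = 0"
    using partial_eq_0_outside_compact[OF K f0] by simp
  have R2: "0 \<le> 2 * R" using R by simp
  note segments = integral_along_segments[OF df2 K df2_0 R2, of ?e]
  have pointwise: "(f x)\<^sup>2 \<le> 2 * R * ?J x" for x
  proof (cases "x \<in> K")
    case False
    have "0 \<le> ?J x" by (intro integral_nonneg_AE AE_I2) auto
    then show ?thesis using False f0 R by simp
  next
    case True
    then have "norm x < R" using KR by auto
    moreover have "norm ((2 * R) *\<^sub>R ?e) \<le> norm (x + (2 * R) *\<^sub>R ?e) + norm x"
      by (metis add_diff_cancel_left' norm_triangle_ineq4)
    ultimately have "x + (2 * R) *\<^sub>R ?e \<notin> K" using KR R by auto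
    then show ?thesis by (intro square_le_integral_partial_along_segment[OF f df R2] f0)
  qed
  have "(\<integral>x. (f x)\<^sup>2 \<partial>lborel) \<le> (\<integral>x. 2 * R * ?J x \<partial>lborel)"
    by (rule integral_mono') (use segments(1) pointwise R in \<open>auto intro!: integral_nonneg_AE\<close>)
  also have "\<dots> = (2 * R)\<^sup>2 * (\<integral>x. (partial i f x)\<^sup>2 \<partial>lborel)"
    using segments(2) by (simp add: power2_eq_square)
  finally show ?thesis .
qed

definition laplacian :: "(real^'n::finite \<Rightarrow> real) \<Rightarrow> real^'n \<Rightarrow> real" where
  "laplacian \<psi> x = (\<Sum>i\<in>UNIV. partial i (partial i \<psi>) x)"

lemma smooth_imp_continuous_laplacian: "smooth \<psi> \<Longrightarrow> continuous_on UNIV (laplacian \<psi>)"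
  unfolding laplacian_def[abs_def] by (intro continuous_on_sum smooth_imp_continuous smooth_partial)

lemma laplacian_eq_0_outside_compact:
  assumes "smooth \<psi>" "compact K" "\<And>y. y \<notin> K \<Longrightarrow> \<psi> y = 0" "x \<notin> K"
  shows "laplacian \<psi> x = 0"
proof -
  have "partial i \<psi> y = 0" if "y \<notin> K" for i y
    using partial_eq_0_outside_compact assms(2,3) that by blast
  then show ?thesis
    unfolding laplacian_def using partial_eq_0_outside_compact[OF assms(2)] assms(4) by simp
qed

lemma integral_inner_vgrad_eq_laplacian:
  assumes \<phi>: "smooth \<phi>" and \<psi>: "smooth \<psi>" and K: "compact K" and \<phi>0: "\<And>x. x \<notin> K \<Longrightarrow> \<phi> x = 0"
  shows "(\<integral>x. vgrad \<phi> x \<bullet> vgrad \<psi> x \<partial>lborel) = - (\<integral>x. \<phi> x * laplacian \<psi> x \<partial>lborel)"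
proof -
  have d\<phi>0: "\<And>x. x \<notin> K \<Longrightarrow> partial i \<phi> x = 0" for i using partial_eq_0_outside_compact[OF K \<phi>0] .
  have cont: "continuous_on UNIV (partial i \<phi>)" "continuous_on UNIV (partial i \<psi>)"
    "continuous_on UNIV (partial i (partial i \<psi>))" for i
    using \<phi> \<psi> by (auto intro!: smooth_imp_continuous smooth_partial)
  have "(\<integral>x. vgrad \<phi> x \<bullet> vgrad \<psi> x \<partial>lborel) = (\<integral>x. (\<Sum>i\<in>UNIV. partial i \<phi> x * partial i \<psi> x) \<partial>lborel)"
    by (simp add: inner_vec_def vgrad_def)
  also have "\<dots> = (\<Sum>i\<in>UNIV. \<integral>x. partial i \<phi> x * partial i \<psi> x \<partial>lborel)"
    by (rule Bochner_Integration.integral_sum, rule integrable_lborel_compact_support[OF _ K])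
       (use cont d\<phi>0 in \<open>auto intro!: continuous_intros\<close>)
  also have "\<dots> = (\<Sum>i\<in>UNIV. - (\<integral>x. \<phi> x * partial i (partial i \<psi>) x \<partial>lborel))"
    using integration_by_parts_partial[OF smooth_imp_differentiable[OF \<phi>]
        smooth_imp_differentiable[OF smooth_partial[OF \<psi>]] cont(1) cont(3) K \<phi>0] by simp
  also have "\<dots> = - (\<integral>x. (\<Sum>i\<in>UNIV. \<phi> x * partial i (partial i \<psi>) x) \<partial>lborel)"
    by (subst Bochner_Integration.integral_sum, rule integrable_lborel_compact_support[OF _ K])
       (use smooth_imp_continuous[OF \<phi>] cont \<phi>0 in \<open>auto intro!: continuous_intros simp: sum_negf\<close>)
  also have "\<dots> = - (\<integral>x. \<phi> x * laplacian \<psi> x \<partial>lborel)"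
    by (simp add: laplacian_def sum_distrib_left)
  finally show ?thesis .
qed

section \<open>The space $H^1_0(D)$\<close>

lemma sets_lebesgue_if_open: "open D \<Longrightarrow> D \<in> sets lebesgue"
  by (simp add: borel_open sets_completionI_sets)

lemma finite_measure_lebesgue_on_bounded:
  assumes "bounded D" "D \<in> sets lebesgue"
  shows "finite_measure (lebesgue_on D)"
proof (rule finite_measureI)
  have "D \<in> lmeasurable" by (rule bounded_set_imp_lmeasurable[OF assms])
  then show "emeasure (lebesgue_on D) (space (lebesgue_on D)) \<noteq> \<infinity>"
    by (simp add: emeasure_restrict_space assms(2) fmeasurable_def)
qed

lemma set_integral_eq_integral_lebesgue_on:
  fixes f :: "'a::euclidean_space \<Rightarrow> real"
  assumes "D \<in> sets lebesgue"
  shows "(LINT x:D|lebesgue. f x) = integral\<^sup>L (lebesgue_on D) f"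
  unfolding set_lebesgue_integral_def by (simp add: integral_restrict_space assms)

lemma set_integrable_iff_integrable_lebesgue_on:
  fixes f :: "'a::euclidean_space \<Rightarrow> real"
  assumes "D \<in> sets lebesgue"
  shows "set_integrable lebesgue D f \<longleftrightarrow> integrable (lebesgue_on D) f"
  unfolding set_integrable_def by (simp add: integrable_restrict_space assms)

lemma set_borel_measurable_iff_lebesgue_on:
  fixes f :: "'a::euclidean_space \<Rightarrow> 'b::real_normed_vector"
  assumes "D \<in> sets lebesgue"
  shows "set_borel_measurable lebesgue D f \<longleftrightarrow> f \<in> borel_measurable (lebesgue_on D)"
  unfolding set_borel_measurable_def by (simp add: borel_measurable_restrict_space_iff assms)

lemma h0_grad_iff_lebesgue_on:
  assumes "D \<in> sets lebesgue"
  shows "h0_grad D h G \<longleftrightarrow>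
     h \<in> borel_measurable (lebesgue_on D) \<and> integrable (lebesgue_on D) (\<lambda>x. (h x)\<^sup>2)
   \<and> G \<in> borel_measurable (lebesgue_on D) \<and> integrable (lebesgue_on D) (\<lambda>x. (norm (G x))\<^sup>2)
   \<and> (\<exists>\<phi>. (\<forall>n. test_fun D (\<phi> n))
        \<and> (\<lambda>n. \<integral>x. (\<phi> n x - h x)\<^sup>2 \<partial>lebesgue_on D) \<longlonglongrightarrow> 0
        \<and> (\<lambda>n. \<integral>x. (norm (vgrad (\<phi> n) x - G x))\<^sup>2 \<partial>lebesgue_on D) \<longlonglongrightarrow> 0)"
  unfolding h0_grad_def set_integral_eq_integral_lebesgue_on[OF assms]
    set_integrable_iff_integrable_lebesgue_on[OF assms] set_borel_measurable_iff_lebesgue_on[OF assms]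
  by simp

lemma integral_lebesgue_on_eq_lborel:
  fixes f :: "'a::euclidean_space \<Rightarrow> real"
  assumes "D \<in> sets lebesgue" "f \<in> borel_measurable lborel" "\<And>x. x \<notin> D \<Longrightarrow> f x = 0"
  shows "integral\<^sup>L (lebesgue_on D) f = integral\<^sup>L lborel f"
proof -
  have "integral\<^sup>L (lebesgue_on D) f = integral\<^sup>L lebesgue (\<lambda>x. indicator D x *\<^sub>R f x)"
    by (simp add: integral_restrict_space assms(1))
  also have "(\<lambda>x. indicator D x *\<^sub>R f x) = f"
    using assms(3) by (auto simp: fun_eq_iff indicator_def)
  also have "integral\<^sup>L lebesgue f = integral\<^sup>L lborel f"
    using assms(2) by (simp add: integral_completion)
  finally show ?thesis .
qed

lemma L2_lebesgue_on_if_continuous_compact_support: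
  fixes g :: "'a::euclidean_space \<Rightarrow> 'b::euclidean_space"
  assumes D: "D \<in> sets lebesgue" and g: "continuous_on UNIV g"
    and K: "compact K" and g0: "\<And>x. x \<notin> K \<Longrightarrow> g x = 0"
  shows "g \<in> borel_measurable (lebesgue_on D)"
    and "integrable (lebesgue_on D) (\<lambda>x. (norm (g x))\<^sup>2)"
proof -
  show "g \<in> borel_measurable (lebesgue_on D)"
    using continuous_imp_measurable_on_sets_lebesgue[OF continuous_on_subset[OF g] D] by simp
  have "integrable lborel (\<lambda>x. (norm (g x))\<^sup>2)"
    by (rule integrable_lborel_compact_support[OF _ K]) (use g g0 in \<open>auto intro!: continuous_intros\<close>)
  then have "integrable lebesgue (\<lambda>x. indicator D x *\<^sub>R (norm (g x))\<^sup>2)"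
    by (intro integrable_mult_indicator D) (simp add: integrable_completion)
  then show "integrable (lebesgue_on D) (\<lambda>x. (norm (g x))\<^sup>2)"
    by (simp add: integrable_restrict_space D)
qed

lemma test_fun_lebesgue_on:
  assumes D: "D \<in> sets lebesgue" and \<phi>: "test_fun D \<phi>"
  shows "\<phi> \<in> borel_measurable (lebesgue_on D)" "integrable (lebesgue_on D) (\<lambda>x. (\<phi> x)\<^sup>2)"
    "vgrad \<phi> \<in> borel_measurable (lebesgue_on D)" "integrable (lebesgue_on D) (\<lambda>x. (norm (vgrad \<phi> x))\<^sup>2)"
    "laplacian \<phi> \<in> borel_measurable (lebesgue_on D)" "integrable (lebesgue_on D) (\<lambda>x. (laplacian \<phi> x)\<^sup>2)"
proof -
  let ?K = "closure {x. \<phi> x \<noteq> 0}"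
  have s: "smooth \<phi>" and K: "compact ?K" using \<phi> by (auto simp: test_fun_def)
  have \<phi>0: "\<And>x. x \<notin> ?K \<Longrightarrow> \<phi> x = 0" using test_fun_vanishes[OF \<phi>] .
  note L2 = L2_lebesgue_on_if_continuous_compact_support[OF D _ K]
  show "\<phi> \<in> borel_measurable (lebesgue_on D)" "integrable (lebesgue_on D) (\<lambda>x. (\<phi> x)\<^sup>2)"
    using L2[OF smooth_imp_continuous[OF s] \<phi>0] by simp_all
  show "vgrad \<phi> \<in> borel_measurable (lebesgue_on D)" "integrable (lebesgue_on D) (\<lambda>x. (norm (vgrad \<phi> x))\<^sup>2)"
    using L2[OF smooth_imp_continuous_vgrad[OF s] vgrad_eq_0_outside_compact[OF K \<phi>0]] by simp_all
  show "laplacian \<phi> \<in> borel_measurable (lebesgue_on D)" "integrable (lebesgue_on D) (\<lambda>x. (laplacian \<phi> x)\<^sup>2)"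
    using L2[OF smooth_imp_continuous_laplacian[OF s] laplacian_eq_0_outside_compact[OF s K \<phi>0]] by simp_all
qed

lemma test_fun_integral_inner_vgrad_eq_laplacian:
  assumes D: "D \<in> sets lebesgue" and \<phi>: "test_fun D \<phi>" and \<psi>: "test_fun D \<psi>"
  shows "(\<integral>x. vgrad \<phi> x \<bullet> vgrad \<psi> x \<partial>lebesgue_on D) = - (\<integral>x. \<phi> x * laplacian \<psi> x \<partial>lebesgue_on D)"
proof -
  let ?K = "closure {x. \<phi> x \<noteq> 0}"
  have s: "smooth \<phi>" "smooth \<psi>" and K: "compact ?K" "?K \<subseteq> D"
    using \<phi> \<psi> by (auto simp: test_fun_def)
  have \<phi>0: "\<And>x. x \<notin> ?K \<Longrightarrow> \<phi> x = 0" using test_fun_vanishes[OF \<phi>] .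
  have outside: "x \<notin> ?K" if "x \<notin> D" for x using that K(2) by blast
  have d\<phi>0: "vgrad \<phi> x = 0" if "x \<notin> D" for x
    by (rule vgrad_eq_0_outside_compact[OF K(1) \<phi>0 outside[OF that]])
  have "(\<integral>x. vgrad \<phi> x \<bullet> vgrad \<psi> x \<partial>lebesgue_on D) = (\<integral>x. vgrad \<phi> x \<bullet> vgrad \<psi> x \<partial>lborel)"
  proof (rule integral_lebesgue_on_eq_lborel[OF D])
    have c: "continuous_on UNIV (\<lambda>x. vgrad \<phi> x \<bullet> vgrad \<psi> x)"
      by (rule continuous_on_inner[OF smooth_imp_continuous_vgrad[OF s(1)] smooth_imp_continuous_vgrad[OF s(2)]])
    show "(\<lambda>x. vgrad \<phi> x \<bullet> vgrad \<psi> x) \<in> borel_measurable lborel"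
      using borel_measurable_continuous_onI[OF c] by simp
  qed (simp add: d\<phi>0)
  moreover have "(\<integral>x. \<phi> x * laplacian \<psi> x \<partial>lebesgue_on D) = (\<integral>x. \<phi> x * laplacian \<psi> x \<partial>lborel)"
  proof (rule integral_lebesgue_on_eq_lborel[OF D])
    have c: "continuous_on UNIV (\<lambda>x. \<phi> x * laplacian \<psi> x)"
      by (rule continuous_on_mult[OF smooth_imp_continuous[OF s(1)] smooth_imp_continuous_laplacian[OF s(2)]])
    show "(\<lambda>x. \<phi> x * laplacian \<psi> x) \<in> borel_measurable lborel"
      using borel_measurable_continuous_onI[OF c] by simp
  qed (simp add: \<phi>0[OF outside])
  ultimately show ?thesis using integral_inner_vgrad_eq_laplacian[OF s K(1) \<phi>0] by simp
qed

lemma vgrad_limit_eq_0_AE: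
  fixes \<eta> :: "nat \<Rightarrow> real^'n::finite \<Rightarrow> real" and G :: "real^'n \<Rightarrow> real^'n"
  assumes D: "D \<in> sets lebesgue" and \<eta>: "\<And>n. test_fun D (\<eta> n)"
    and \<eta>_lim: "(\<lambda>n. \<integral>x. (\<eta> n x)\<^sup>2 \<partial>lebesgue_on D) \<longlonglongrightarrow> 0"
    and G: "G \<in> borel_measurable (lebesgue_on D)" "integrable (lebesgue_on D) (\<lambda>x. (norm (G x))\<^sup>2)"
    and G_lim: "(\<lambda>n. \<integral>x. (norm (vgrad (\<eta> n) x - G x))\<^sup>2 \<partial>lebesgue_on D) \<longlonglongrightarrow> 0"
  shows "AE x in lebesgue_on D. G x = 0"
proof -
  \<comment> \<open>For a test function $\psi$, $\int G\cdot\nabla\psi = \lim_n \int \nabla\eta_n\cdot\nabla\psi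
    = -\lim_n \int \eta_n\,\Delta\psi = 0$; taking $\psi = \eta_m$ and letting $m\to\infty$ gives
    $\int |G|^2 = 0$.\<close>
  let ?M = "lebesgue_on D"
  note \<eta>_L2 = test_fun_lebesgue_on[OF D \<eta>]
  have \<eta>2: "integrable ?M (\<lambda>x. (norm (\<eta> n x))\<^sup>2)" "integrable ?M (\<lambda>x. (norm (laplacian (\<eta> n) x))\<^sup>2)" for n
    using \<eta>_L2 by simp_all
  have orthogonal: "(\<integral>x. G x \<bullet> vgrad (\<eta> m) x \<partial>?M) = 0" for m
  proof -
    have to_G: "(\<lambda>n. \<integral>x. vgrad (\<eta> n) x \<bullet> vgrad (\<eta> m) x \<partial>?M) \<longlonglongrightarrow> (\<integral>x. G x \<bullet> vgrad (\<eta> m) x \<partial>?M)"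
      by (rule tendsto_integral_inner_L2[OF \<eta>_L2(3) G(1) \<eta>_L2(3) \<eta>_L2(4) G(2) \<eta>_L2(4) G_lim])
    have "(\<lambda>n. \<integral>x. \<eta> n x \<bullet> laplacian (\<eta> m) x \<partial>?M) \<longlonglongrightarrow> (\<integral>x. 0 \<bullet> laplacian (\<eta> m) x \<partial>?M)"
      by (rule tendsto_integral_inner_L2[OF \<eta>_L2(1) _ \<eta>_L2(5) \<eta>2(1) _ \<eta>2(2)]) (use \<eta>_lim in simp_all)
    then have "(\<lambda>n. - (\<integral>x. \<eta> n x * laplacian (\<eta> m) x \<partial>?M)) \<longlonglongrightarrow> - 0"
      by (intro tendsto_minus) simp
    then have to_0: "(\<lambda>n. \<integral>x. vgrad (\<eta> n) x \<bullet> vgrad (\<eta> m) x \<partial>?M) \<longlonglongrightarrow> 0"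
      by (simp only: test_fun_integral_inner_vgrad_eq_laplacian[OF D \<eta> \<eta>] minus_zero)
    show ?thesis by (rule LIMSEQ_unique[OF to_G to_0])
  qed
  have "(\<lambda>n. \<integral>x. vgrad (\<eta> n) x \<bullet> G x \<partial>?M) \<longlonglongrightarrow> (\<integral>x. G x \<bullet> G x \<partial>?M)"
    by (rule tendsto_integral_inner_L2[OF \<eta>_L2(3) G(1) G(1) \<eta>_L2(4) G(2) G(2) G_lim])
  then have "(\<integral>x. (norm (G x))\<^sup>2 \<partial>?M) = 0"
    using orthogonal by (simp add: inner_commute power2_norm_eq_inner LIMSEQ_const_iff)
  then show ?thesis using integral_nonneg_eq_0_iff_AE[OF G(2)] by simp
qed

lemma h0_grad_diff:
  fixes h1 h2 :: "real^'n::finite \<Rightarrow> real"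
  assumes D: "D \<in> sets lebesgue" and h1: "h0_grad D h1 G1" and h2: "h0_grad D h2 G2"
  shows "h0_grad D (\<lambda>x. h1 x - h2 x) (\<lambda>x. G1 x - G2 x)"
proof -
  let ?M = "lebesgue_on D"
  from h1[unfolded h0_grad_iff_lebesgue_on[OF D]] obtain \<phi> where
    h1m: "h1 \<in> borel_measurable ?M" and h1i: "integrable ?M (\<lambda>x. (h1 x)\<^sup>2)"
    and G1m: "G1 \<in> borel_measurable ?M" and G1i: "integrable ?M (\<lambda>x. (norm (G1 x))\<^sup>2)"
    and \<phi>: "\<And>n. test_fun D (\<phi> n)"
    and \<phi>_h1: "(\<lambda>n. \<integral>x. (\<phi> n x - h1 x)\<^sup>2 \<partial>?M) \<longlonglongrightarrow> 0"
    and \<phi>_G1: "(\<lambda>n. \<integral>x. (norm (vgrad (\<phi> n) x - G1 x))\<^sup>2 \<partial>?M) \<longlonglongrightarrow> 0"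
    by blast
  from h2[unfolded h0_grad_iff_lebesgue_on[OF D]] obtain \<psi> where
    h2m: "h2 \<in> borel_measurable ?M" and h2i: "integrable ?M (\<lambda>x. (h2 x)\<^sup>2)"
    and G2m: "G2 \<in> borel_measurable ?M" and G2i: "integrable ?M (\<lambda>x. (norm (G2 x))\<^sup>2)"
    and \<psi>: "\<And>n. test_fun D (\<psi> n)"
    and \<psi>_h2: "(\<lambda>n. \<integral>x. (\<psi> n x - h2 x)\<^sup>2 \<partial>?M) \<longlonglongrightarrow> 0"
    and \<psi>_G2: "(\<lambda>n. \<integral>x. (norm (vgrad (\<psi> n) x - G2 x))\<^sup>2 \<partial>?M) \<longlonglongrightarrow> 0"
    by blast
  note \<phi>_L2 = test_fun_lebesgue_on[OF D \<phi>] and \<psi>_L2 = test_fun_lebesgue_on[OF D \<psi>]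
  have "(\<lambda>n. \<integral>x. (norm ((\<phi> n x - \<psi> n x) - (h1 x - h2 x)))\<^sup>2 \<partial>?M) \<longlonglongrightarrow> 0"
    by (rule tendsto_L2_diff[OF \<phi>_L2(1) \<psi>_L2(1) h1m h2m])
       (use \<phi>_L2(2) \<psi>_L2(2) h1i h2i \<phi>_h1 \<psi>_h2 in simp_all)
  moreover have "(\<lambda>n. \<integral>x. (norm ((vgrad (\<phi> n) x - vgrad (\<psi> n) x) - (G1 x - G2 x)))\<^sup>2 \<partial>?M) \<longlonglongrightarrow> 0"
    by (rule tendsto_L2_diff[OF \<phi>_L2(3) \<psi>_L2(3) G1m G2m \<phi>_L2(4) G1i \<psi>_L2(4) G2i \<phi>_G1 \<psi>_G2])
  moreover have "vgrad (\<lambda>x. \<phi> n x - \<psi> n x) x = vgrad (\<phi> n) x - vgrad (\<psi> n) x" for n x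
    using \<phi> \<psi> by (intro vgrad_diff smooth_imp_differentiable) (auto simp: test_fun_def)
  moreover have "integrable ?M (\<lambda>x. (h1 x - h2 x)\<^sup>2)"
    using integrable_norm_diff_square[OF h1m h2m] h1i h2i by simp
  moreover have "integrable ?M (\<lambda>x. (norm (G1 x - G2 x))\<^sup>2)"
    by (rule integrable_norm_diff_square[OF G1m G2m G1i G2i])
  ultimately show ?thesis
    unfolding h0_grad_iff_lebesgue_on[OF D] using h1m h2m G1m G2m test_fun_diff[OF \<phi> \<psi>]
    by (intro conjI exI[of _ "\<lambda>n x. \<phi> n x - \<psi> n x"] borel_measurable_diff) simp_all
qed

lemma weak_gradient_unique:
  assumes D: "D \<in> sets lebesgue" and "h0_grad D h G1" "h0_grad D h G2"
  shows "AE x in lebesgue_on D. G1 x = G2 x"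
proof -
  have "h0_grad D (\<lambda>x. h x - h x) (\<lambda>x. G1 x - G2 x)"
    by (rule h0_grad_diff[OF D assms(2,3)])
  from this[unfolded h0_grad_iff_lebesgue_on[OF D]] obtain \<eta> where
    "(\<lambda>x. G1 x - G2 x) \<in> borel_measurable (lebesgue_on D)"
    "integrable (lebesgue_on D) (\<lambda>x. (norm (G1 x - G2 x))\<^sup>2)"
    "\<And>n. test_fun D (\<eta> n)"
    "(\<lambda>n. \<integral>x. (\<eta> n x - (h x - h x))\<^sup>2 \<partial>lebesgue_on D) \<longlonglongrightarrow> 0"
    "(\<lambda>n. \<integral>x. (norm (vgrad (\<eta> n) x - (G1 x - G2 x)))\<^sup>2 \<partial>lebesgue_on D) \<longlonglongrightarrow> 0"
    by blast
  then have "AE x in lebesgue_on D. G1 x - G2 x = 0"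
    by (intro vgrad_limit_eq_0_AE[OF D]) simp_all
  then show ?thesis by simp
qed

lemma h0_grad_wgrad:
  assumes "H10 D h" shows "h0_grad D h (wgrad D h)"
  using assms unfolding H10_def wgrad_def by (rule someI_ex)

lemma H10_diff:
  assumes "D \<in> sets lebesgue" "H10 D h1" "H10 D h2"
  shows "H10 D (\<lambda>x. h1 x - h2 x)"
  using h0_grad_diff[OF assms(1) h0_grad_wgrad[OF assms(2)] h0_grad_wgrad[OF assms(3)]]
  unfolding H10_def by blast

lemma wgrad_diff:
  assumes D: "D \<in> sets lebesgue" and "H10 D h1" "H10 D h2"
  shows "AE x in lebesgue_on D. wgrad D (\<lambda>x. h1 x - h2 x) x = wgrad D h1 x - wgrad D h2 x"
  using weak_gradient_unique[OF D h0_grad_wgrad[OF H10_diff[OF assms]]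
      h0_grad_diff[OF D h0_grad_wgrad[OF assms(2)] h0_grad_wgrad[OF assms(3)]]] .

lemma Poincare_inequality_test_fun:
  fixes \<phi> :: "real^'n::finite \<Rightarrow> real"
  assumes D: "D \<in> sets lebesgue" and R: "R > 0" "D \<subseteq> ball 0 R" and \<phi>: "test_fun D \<phi>"
  shows "(\<integral>x. (\<phi> x)\<^sup>2 \<partial>lebesgue_on D) \<le> (2 * R)\<^sup>2 * (\<integral>x. (norm (vgrad \<phi> x))\<^sup>2 \<partial>lebesgue_on D)"
proof -
  fix i :: 'n \<comment> \<open>any coordinate direction will do\<close>
  let ?K = "closure {x. \<phi> x \<noteq> 0}"
  have s: "smooth \<phi>" and K: "compact ?K" "?K \<subseteq> D" using \<phi> by (auto simp: test_fun_def)
  have \<phi>0: "\<And>x. x \<notin> ?K \<Longrightarrow> \<phi> x = 0" using test_fun_vanishes[OF \<phi>] .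
  have outside: "x \<notin> ?K" if "x \<notin> D" for x using that K(2) by blast
  have c\<phi>: "continuous_on UNIV (\<lambda>x. (\<phi> x)\<^sup>2)"
    using smooth_imp_continuous[OF s] by (intro continuous_intros)
  have c\<phi>': "continuous_on UNIV (\<lambda>x. (norm (vgrad \<phi> x))\<^sup>2)"
    using smooth_imp_continuous_vgrad[OF s] by (intro continuous_intros)
  have d\<phi>0: "vgrad \<phi> x = 0" if "x \<notin> ?K" for x by (rule vgrad_eq_0_outside_compact[OF K(1) \<phi>0 that])
  have "(\<integral>x. (\<phi> x)\<^sup>2 \<partial>lebesgue_on D) = (\<integral>x. (\<phi> x)\<^sup>2 \<partial>lborel)"
    by (rule integral_lebesgue_on_eq_lborel[OF D]) (use borel_measurable_continuous_onI[OF c\<phi>] \<phi>0[OF outside] in simp_all)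
  also have "\<dots> \<le> (2 * R)\<^sup>2 * (\<integral>x. (partial i \<phi> x)\<^sup>2 \<partial>lborel)"
    by (rule Poincare_inequality_compact_support[where K = ?K, OF smooth_imp_differentiable[OF s]
          smooth_imp_continuous[OF smooth_partial[OF s]] K(1) \<phi>0 R(1) order_trans[OF K(2) R(2)]])
  also have "\<dots> \<le> (2 * R)\<^sup>2 * (\<integral>x. (norm (vgrad \<phi> x))\<^sup>2 \<partial>lborel)"
  proof (rule mult_left_mono[OF integral_mono'])
    show "integrable lborel (\<lambda>x. (norm (vgrad \<phi> x))\<^sup>2)"
      by (rule integrable_lborel_compact_support[OF c\<phi>' K(1)]) (simp add: d\<phi>0)
    show "(partial i \<phi> x)\<^sup>2 \<le> (norm (vgrad \<phi> x))\<^sup>2" for x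
    proof -
      have "\<bar>partial i \<phi> x\<bar> \<le> norm (vgrad \<phi> x)"
        using component_le_norm_cart[of "vgrad \<phi> x" i] by (simp add: vgrad_def)
      then show ?thesis by (metis abs_le_square_iff abs_norm_cancel)
    qed
  qed simp_all
  also have "(\<integral>x. (norm (vgrad \<phi> x))\<^sup>2 \<partial>lborel) = (\<integral>x. (norm (vgrad \<phi> x))\<^sup>2 \<partial>lebesgue_on D)"
    by (rule integral_lebesgue_on_eq_lborel[OF D, symmetric])
       (use borel_measurable_continuous_onI[OF c\<phi>'] d\<phi>0[OF outside] in simp_all)
  finally show ?thesis .
qed

lemma Poincare_inequality_h0_grad:
  assumes D: "D \<in> sets lebesgue" and R: "R > 0" "D \<subseteq> ball 0 R" and hG: "h0_grad D h G"
  shows "(\<integral>x. (h x)\<^sup>2 \<partial>lebesgue_on D) \<le> (2 * R)\<^sup>2 * (\<integral>x. (norm (G x))\<^sup>2 \<partial>lebesgue_on D)"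
proof -
  let ?M = "lebesgue_on D"
  from hG[unfolded h0_grad_iff_lebesgue_on[OF D]] obtain \<phi> where
    hm: "h \<in> borel_measurable ?M" and hi: "integrable ?M (\<lambda>x. (h x)\<^sup>2)"
    and Gm: "G \<in> borel_measurable ?M" and Gi: "integrable ?M (\<lambda>x. (norm (G x))\<^sup>2)"
    and \<phi>: "\<And>n. test_fun D (\<phi> n)"
    and \<phi>_h: "(\<lambda>n. \<integral>x. (\<phi> n x - h x)\<^sup>2 \<partial>?M) \<longlonglongrightarrow> 0"
    and \<phi>_G: "(\<lambda>n. \<integral>x. (norm (vgrad (\<phi> n) x - G x))\<^sup>2 \<partial>?M) \<longlonglongrightarrow> 0"
    by blast
  note \<phi>_L2 = test_fun_lebesgue_on[OF D \<phi>]
  have "(\<lambda>n. \<integral>x. (norm (\<phi> n x))\<^sup>2 \<partial>?M) \<longlonglongrightarrow> (\<integral>x. (norm (h x))\<^sup>2 \<partial>?M)"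
    by (rule tendsto_integral_norm_square_L2[OF \<phi>_L2(1) hm]) (use \<phi>_L2(2) hi \<phi>_h in simp_all)
  then have lim_h: "(\<lambda>n. \<integral>x. (\<phi> n x)\<^sup>2 \<partial>?M) \<longlonglongrightarrow> (\<integral>x. (h x)\<^sup>2 \<partial>?M)" by simp
  have lim_G: "(\<lambda>n. \<integral>x. (norm (vgrad (\<phi> n) x))\<^sup>2 \<partial>?M) \<longlonglongrightarrow> (\<integral>x. (norm (G x))\<^sup>2 \<partial>?M)"
    by (rule tendsto_integral_norm_square_L2[OF \<phi>_L2(3) Gm \<phi>_L2(4) Gi \<phi>_G])
  show ?thesis
    by (rule LIMSEQ_le[OF lim_h tendsto_mult_left[OF lim_G]])
       (use Poincare_inequality_test_fun[OF D R \<phi>] in auto)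
qed

lemma H10_lebesgue_on:
  assumes D: "D \<in> sets lebesgue" and h: "H10 D h"
  shows "h \<in> borel_measurable (lebesgue_on D)" "integrable (lebesgue_on D) (\<lambda>x. (h x)\<^sup>2)"
    "wgrad D h \<in> borel_measurable (lebesgue_on D)"
    "integrable (lebesgue_on D) (\<lambda>x. (norm (wgrad D h x))\<^sup>2)"
  using h0_grad_wgrad[OF h] unfolding h0_grad_iff_lebesgue_on[OF D] by blast+

lemma normV_lebesgue_on:
  assumes D: "D \<in> sets lebesgue"
  shows "normV D h
    = sqrt ((\<integral>x. (h x)\<^sup>2 \<partial>lebesgue_on D) + (\<integral>x. (norm (wgrad D h x))\<^sup>2 \<partial>lebesgue_on D))"
  unfolding normV_def by (simp add: set_integral_eq_integral_lebesgue_on[OF D])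

lemma normV_square:
  assumes "D \<in> sets lebesgue"
  shows "(normV D h)\<^sup>2 = (\<integral>x. (h x)\<^sup>2 \<partial>lebesgue_on D) + (\<integral>x. (norm (wgrad D h x))\<^sup>2 \<partial>lebesgue_on D)"
  unfolding normV_lebesgue_on[OF assms] by (simp add: add_nonneg_nonneg)

lemma normV_nonneg:
  assumes "D \<in> sets lebesgue"
  shows "0 \<le> normV D h"
  unfolding normV_lebesgue_on[OF assms] by (simp add: add_nonneg_nonneg)

lemma L2_norm_wgrad_le_normV:
  assumes "D \<in> sets lebesgue"
  shows "sqrt (\<integral>x. (norm (wgrad D h x))\<^sup>2 \<partial>lebesgue_on D) \<le> normV D h"
  unfolding normV_lebesgue_on[OF assms] by (simp add: real_sqrt_le_mono)

lemma tendsto_wgrad_L2: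
  assumes D: "D \<in> sets lebesgue" and h: "H10 D h" and hs: "\<And>n. H10 D (hs n)"
    and lim: "(\<lambda>n. normV D (\<lambda>x. hs n x - h x)) \<longlonglongrightarrow> 0"
  shows "(\<lambda>n. \<integral>x. (norm (wgrad D (hs n) x - wgrad D h x))\<^sup>2 \<partial>lebesgue_on D) \<longlonglongrightarrow> 0"
proof (rule tendsto_sandwich[of "\<lambda>_. 0" _ _ "\<lambda>n. (normV D (\<lambda>x. hs n x - h x))\<^sup>2"])
  have "(\<integral>x. (norm (wgrad D (hs n) x - wgrad D h x))\<^sup>2 \<partial>lebesgue_on D)
      = (\<integral>x. (norm (wgrad D (\<lambda>x. hs n x - h x) x))\<^sup>2 \<partial>lebesgue_on D)" for n
  proof (rule integral_cong_AE)
    show "(\<lambda>x. (norm (wgrad D (hs n) x - wgrad D h x))\<^sup>2) \<in> borel_measurable (lebesgue_on D)"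
      using H10_lebesgue_on(3)[OF D hs[of n]] H10_lebesgue_on(3)[OF D h] by measurable
    show "(\<lambda>x. (norm (wgrad D (\<lambda>x. hs n x - h x) x))\<^sup>2) \<in> borel_measurable (lebesgue_on D)"
      using H10_lebesgue_on(3)[OF D H10_diff[OF D hs[of n] h]] by measurable
    show "AE x in lebesgue_on D. (norm (wgrad D (hs n) x - wgrad D h x))\<^sup>2
        = (norm (wgrad D (\<lambda>x. hs n x - h x) x))\<^sup>2"
      using wgrad_diff[OF D hs[of n] h] by eventually_elim simp
  qed
  then show "\<forall>\<^sub>F n in sequentially. (\<integral>x. (norm (wgrad D (hs n) x - wgrad D h x))\<^sup>2 \<partial>lebesgue_on D)
      \<le> (normV D (\<lambda>x. hs n x - h x))\<^sup>2"
    by (simp add: normV_square[OF D])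
  show "(\<lambda>n. (normV D (\<lambda>x. hs n x - h x))\<^sup>2) \<longlonglongrightarrow> 0"
    using tendsto_power[OF lim, of 2] by simp
qed simp_all

lemma Young_inequality_weighted: "c > 0 \<Longrightarrow> x * y \<le> c / 2 * x\<^sup>2 + y\<^sup>2 / (2 * (c::real))"
proof -
  assume c: "c > 0"
  have "0 \<le> (c * x - y)\<^sup>2" by simp
  then have "2 * c * (x * y) \<le> c * c * x\<^sup>2 + y\<^sup>2" by (simp add: power2_eq_square algebra_simps)
  then have "x * y \<le> (c * c * x\<^sup>2 + y\<^sup>2) / (2 * c)" using c by (simp add: pos_le_divide_eq mult_ac)
  also have "\<dots> = c / 2 * x\<^sup>2 + y\<^sup>2 / (2 * c)" using c by (simp add: add_divide_distrib)
  finally show ?thesis .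
qed

lemma strongly_monotone_lower_bound:
  fixes F :: "'a::real_inner \<Rightarrow> 'a"
  assumes c: "c > 0" and mono: "c * (norm ((a + b) - b))\<^sup>2 \<le> (F (a + b) - F b) \<bullet> ((a + b) - b)"
  shows "c / 2 * (norm a)\<^sup>2 - (norm (F b))\<^sup>2 / (2 * c) \<le> F (a + b) \<bullet> a"
proof -
  have "c * (norm a)\<^sup>2 \<le> F (a + b) \<bullet> a - F b \<bullet> a" using mono by (simp add: inner_diff_left)
  moreover have "- (F b \<bullet> a) \<le> norm a * norm (F b)"
    using Cauchy_Schwarz_ineq2[of "F b" a] by (simp add: mult.commute)
  moreover have "norm a * norm (F b) \<le> c / 2 * (norm a)\<^sup>2 + (norm (F b))\<^sup>2 / (2 * c)"
    by (rule Young_inequality_weighted[OF c])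
  ultimately show ?thesis by linarith
qed

section \<open>The operator $A_f$\<close>

locale gradient_flux_operator =
  fixes D :: "(real^'n::finite) set" and \<sigma> :: "real^'n \<Rightarrow> real" and f :: "real^'n \<Rightarrow> real" and L :: real
  assumes D_sets: "D \<in> sets lebesgue"
    and D_finite: "finite_measure (lebesgue_on D)"
    and lipschitz: "L-lipschitz_on UNIV (vgrad \<sigma>)"
    and f: "H10 D f"
begin

definition flux :: "(real^'n \<Rightarrow> real) \<Rightarrow> real^'n \<Rightarrow> real^'n" where
  "flux h x = vgrad \<sigma> (wgrad D h x + wgrad D f x)"

lemma Apair_eq_integral: "Apair D \<sigma> f h g = - (\<integral>x. flux h x \<bullet> wgrad D g x \<partial>lebesgue_on D)"
  unfolding Apair_def flux_def by (simp add: set_integral_eq_integral_lebesgue_on[OF D_sets])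

lemma flux_L2:
  assumes h: "H10 D h"
  shows "flux h \<in> borel_measurable (lebesgue_on D)"
    and "integrable (lebesgue_on D) (\<lambda>x. (norm (flux h x))\<^sup>2)"
    and "(\<integral>x. (norm (flux h x))\<^sup>2 \<partial>lebesgue_on D)
      \<le> 2 * (norm (vgrad \<sigma> 0))\<^sup>2 * measure (lebesgue_on D) (space (lebesgue_on D))
        + 4 * L\<^sup>2 * ((\<integral>x. (norm (wgrad D h x))\<^sup>2 \<partial>lebesgue_on D) + (\<integral>x. (norm (wgrad D f x))\<^sup>2 \<partial>lebesgue_on D))"
proof -
  let ?M = "lebesgue_on D" and ?A = "\<lambda>x. wgrad D h x + wgrad D f x"
  note Hh = H10_lebesgue_on[OF D_sets h] and Hf = H10_lebesgue_on[OF D_sets f]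
  have Am: "?A \<in> borel_measurable ?M" using Hh(3) Hf(3) by measurable
  have minus_f: "(\<lambda>x. - wgrad D f x) \<in> borel_measurable ?M" using Hf(3) by measurable
  have A2: "integrable ?M (\<lambda>x. (norm (?A x))\<^sup>2)"
    using integrable_norm_diff_square[OF Hh(3) minus_f Hh(4)] Hf(4) by simp
  have "(\<integral>x. (norm (?A x))\<^sup>2 \<partial>?M)
      \<le> (\<integral>x. 2 * (norm (wgrad D h x))\<^sup>2 + 2 * (norm (wgrad D f x))\<^sup>2 \<partial>?M)"
    by (rule integral_mono[OF A2]) (use Hh(4) Hf(4) norm_diff_square_le[of _ "- _"] in simp_all)
  also have "\<dots> = 2 * ((\<integral>x. (norm (wgrad D h x))\<^sup>2 \<partial>?M) + (\<integral>x. (norm (wgrad D f x))\<^sup>2 \<partial>?M))"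
    using Hh(4) Hf(4) by simp
  finally have A_le: "(\<integral>x. (norm (?A x))\<^sup>2 \<partial>?M)
      \<le> 2 * ((\<integral>x. (norm (wgrad D h x))\<^sup>2 \<partial>?M) + (\<integral>x. (norm (wgrad D f x))\<^sup>2 \<partial>?M))" .
  note comp = L2_lipschitz_comp[OF lipschitz D_finite Am A2]
  show "flux h \<in> borel_measurable ?M" "integrable ?M (\<lambda>x. (norm (flux h x))\<^sup>2)"
    using comp(1,2) by (simp_all add: flux_def[abs_def])
  have "2 * L\<^sup>2 * (\<integral>x. (norm (?A x))\<^sup>2 \<partial>?M)
      \<le> 4 * L\<^sup>2 * ((\<integral>x. (norm (wgrad D h x))\<^sup>2 \<partial>?M) + (\<integral>x. (norm (wgrad D f x))\<^sup>2 \<partial>?M))"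
    using mult_left_mono[OF A_le, of "2 * L\<^sup>2"] by (simp add: algebra_simps)
  then show "(\<integral>x. (norm (flux h x))\<^sup>2 \<partial>?M)
      \<le> 2 * (norm (vgrad \<sigma> 0))\<^sup>2 * measure ?M (space ?M)
        + 4 * L\<^sup>2 * ((\<integral>x. (norm (wgrad D h x))\<^sup>2 \<partial>?M) + (\<integral>x. (norm (wgrad D f x))\<^sup>2 \<partial>?M))"
    using comp(3) unfolding flux_def by linarith
qed

lemma integrable_flux_inner:
  assumes "H10 D h" "H10 D g"
  shows "integrable (lebesgue_on D) (\<lambda>x. flux h x \<bullet> wgrad D g x)"
  by (rule L2_Cauchy_Schwarz_inner(1)[OF flux_L2(1)[OF assms(1)] H10_lebesgue_on(3)[OF D_sets assms(2)]
        flux_L2(2)[OF assms(1)] H10_lebesgue_on(4)[OF D_sets assms(2)]])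

lemma Apair_diff:
  assumes "H10 D h1" "H10 D h2" "H10 D g"
  shows "Apair D \<sigma> f h1 g - Apair D \<sigma> f h2 g
    = - (\<integral>x. (flux h1 x - flux h2 x) \<bullet> wgrad D g x \<partial>lebesgue_on D)"
  using integrable_flux_inner[OF assms(1,3)] integrable_flux_inner[OF assms(2,3)]
  by (simp add: Apair_eq_integral inner_diff_left)

lemma Apair_monotone:
  assumes mono: "\<And>u v. 0 \<le> (vgrad \<sigma> u - vgrad \<sigma> v) \<bullet> (u - v)" and h1: "H10 D h1" and h2: "H10 D h2"
  shows "Apair D \<sigma> f h1 (\<lambda>x. h1 x - h2 x) - Apair D \<sigma> f h2 (\<lambda>x. h1 x - h2 x) \<le> 0"
proof -
  let ?w = "\<lambda>x. h1 x - h2 x"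
  have "AE x in lebesgue_on D. 0 \<le> (flux h1 x - flux h2 x) \<bullet> wgrad D ?w x"
    using wgrad_diff[OF D_sets h1 h2]
  proof eventually_elim
    case (elim x)
    then show ?case
      using mono[of "wgrad D h1 x + wgrad D f x" "wgrad D h2 x + wgrad D f x"] by (simp add: flux_def)
  qed
  then have "0 \<le> (\<integral>x. (flux h1 x - flux h2 x) \<bullet> wgrad D ?w x \<partial>lebesgue_on D)"
    by (rule integral_nonneg_AE)
  then show ?thesis using Apair_diff[OF h1 h2 H10_diff[OF D_sets h1 h2]] by simp
qed

lemma tendsto_flux_L2:
  assumes h: "H10 D h" and hs: "\<And>n. H10 D (hs n)"
    and lim: "(\<lambda>n. normV D (\<lambda>x. hs n x - h x)) \<longlonglongrightarrow> 0"
  shows "(\<lambda>n. \<integral>x. (norm (flux (hs n) x - flux h x))\<^sup>2 \<partial>lebesgue_on D) \<longlonglongrightarrow> 0"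
proof (rule tendsto_sandwich[of "\<lambda>_. 0" _ _
    "\<lambda>n. L\<^sup>2 * (\<integral>x. (norm (wgrad D (hs n) x - wgrad D h x))\<^sup>2 \<partial>lebesgue_on D)"])
  have "(\<integral>x. (norm (flux (hs n) x - flux h x))\<^sup>2 \<partial>lebesgue_on D)
      \<le> L\<^sup>2 * (\<integral>x. (norm (wgrad D (hs n) x - wgrad D h x))\<^sup>2 \<partial>lebesgue_on D)" for n
  proof -
    note Hn = H10_lebesgue_on[OF D_sets hs[of n]] and Hh = H10_lebesgue_on[OF D_sets h]
    have "(norm (flux (hs n) x - flux h x))\<^sup>2 \<le> L\<^sup>2 * (norm (wgrad D (hs n) x - wgrad D h x))\<^sup>2" for x
    proof -
      have "norm (flux (hs n) x - flux h x) \<le> L * norm (wgrad D (hs n) x - wgrad D h x)"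
        using lipschitz_on_normD[OF lipschitz, of "wgrad D (hs n) x + wgrad D f x" "wgrad D h x + wgrad D f x"]
        by (simp add: flux_def)
      then show ?thesis by (simp add: power_mono power_mult_distrib[symmetric])
    qed
    moreover have "integrable (lebesgue_on D) (\<lambda>x. (norm (wgrad D (hs n) x - wgrad D h x))\<^sup>2)"
      by (rule integrable_norm_diff_square[OF Hn(3) Hh(3) Hn(4) Hh(4)])
    ultimately show ?thesis by (subst integral_mult_right_zero[symmetric]) (rule integral_mono'; simp)
  qed
  then show "\<forall>\<^sub>F n in sequentially. (\<integral>x. (norm (flux (hs n) x - flux h x))\<^sup>2 \<partial>lebesgue_on D)
      \<le> L\<^sup>2 * (\<integral>x. (norm (wgrad D (hs n) x - wgrad D h x))\<^sup>2 \<partial>lebesgue_on D)"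
    by simp
  show "(\<lambda>n. L\<^sup>2 * (\<integral>x. (norm (wgrad D (hs n) x - wgrad D h x))\<^sup>2 \<partial>lebesgue_on D)) \<longlonglongrightarrow> 0"
    using tendsto_mult_right_zero[OF tendsto_wgrad_L2[OF D_sets h hs lim]] by simp
qed simp_all

lemma Apair_demicontinuous:
  assumes h: "H10 D h" and hs: "\<And>n. H10 D (hs n)" and g: "H10 D g"
    and lim: "(\<lambda>n. normV D (\<lambda>x. hs n x - h x)) \<longlonglongrightarrow> 0"
  shows "(\<lambda>n. Apair D \<sigma> f (hs n) g) \<longlonglongrightarrow> Apair D \<sigma> f h g"
proof -
  note Hg = H10_lebesgue_on[OF D_sets g]
  have "(\<lambda>n. \<integral>x. flux (hs n) x \<bullet> wgrad D g x \<partial>lebesgue_on D) \<longlonglongrightarrow> (\<integral>x. flux h x \<bullet> wgrad D g x \<partial>lebesgue_on D)"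
    by (rule tendsto_integral_inner_L2[OF flux_L2(1)[OF hs] flux_L2(1)[OF h] Hg(3)
          flux_L2(2)[OF hs] flux_L2(2)[OF h] Hg(4) tendsto_flux_L2[OF h hs lim]])
  then show ?thesis unfolding Apair_eq_integral by (rule tendsto_minus)
qed

lemma Apair_coercive:
  assumes c: "c > 0" and strong: "\<And>u v. c * (norm (u - v))\<^sup>2 \<le> (vgrad \<sigma> u - vgrad \<sigma> v) \<bullet> (u - v)"
    and R: "R > 0" "D \<subseteq> ball 0 R"
  obtains C1 C2 where "C1 > 0" "C2 > 0" "\<And>h. H10 D h \<Longrightarrow> Apair D \<sigma> f h h \<le> - C1 * (normV D h)\<^sup>2 + C2"
proof -
  let ?M = "lebesgue_on D" and ?F = "vgrad \<sigma>"
  note Hf = H10_lebesgue_on[OF D_sets f]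
  note Ff = L2_lipschitz_comp[OF lipschitz D_finite Hf(3) Hf(4)]
  define Q where "Q = (\<integral>x. (norm (?F (wgrad D f x)))\<^sup>2 \<partial>?M)"
  define P where "P = (2 * R)\<^sup>2 + 1"
  define C1 where "C1 = c / (2 * P)"
  define C2 where "C2 = Q / (2 * c) + 1"
  have P: "P > 0" by (simp add: P_def add_nonneg_pos)
  have "Q \<ge> 0" by (simp add: Q_def)
  then have pos: "C1 > 0" "C2 > 0" using c P by (simp_all add: C1_def C2_def add_nonneg_pos)
  have "Apair D \<sigma> f h h \<le> - C1 * (normV D h)\<^sup>2 + C2" if h: "H10 D h" for h
  proof -
    note Hh = H10_lebesgue_on[OF D_sets h]
    let ?I = "\<integral>x. (norm (wgrad D h x))\<^sup>2 \<partial>?M"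
    have "(normV D h)\<^sup>2 \<le> P * ?I"
      using Poincare_inequality_h0_grad[OF D_sets R h0_grad_wgrad[OF h]]
      unfolding normV_square[OF D_sets] P_def by (simp add: algebra_simps)
    then have "C1 * (normV D h)\<^sup>2 \<le> C1 * (P * ?I)"
      using pos by (simp add: mult_left_mono)
    also have "\<dots> = c / 2 * ?I"
      using P by (simp add: C1_def field_simps)
    finally have "C1 * (normV D h)\<^sup>2 \<le> c / 2 * ?I" .
    moreover have "(\<integral>x. c / 2 * (norm (wgrad D h x))\<^sup>2 - (norm (?F (wgrad D f x)))\<^sup>2 / (2 * c) \<partial>?M)
        \<le> (\<integral>x. flux h x \<bullet> wgrad D h x \<partial>?M)"
    proof (rule integral_mono[OF _ integrable_flux_inner[OF h h]])
      show "integrable ?M (\<lambda>x. c / 2 * (norm (wgrad D h x))\<^sup>2 - (norm (?F (wgrad D f x)))\<^sup>2 / (2 * c))"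
        using Hh(4) Ff(2) by simp
      show "c / 2 * (norm (wgrad D h x))\<^sup>2 - (norm (?F (wgrad D f x)))\<^sup>2 / (2 * c) \<le> flux h x \<bullet> wgrad D h x"
        for x unfolding flux_def by (rule strongly_monotone_lower_bound[OF c strong])
    qed
    moreover have "(\<integral>x. c / 2 * (norm (wgrad D h x))\<^sup>2 - (norm (?F (wgrad D f x)))\<^sup>2 / (2 * c) \<partial>?M)
        = c / 2 * ?I - Q / (2 * c)"
      using Hh(4) Ff(2) by (simp add: Q_def)
    ultimately show ?thesis unfolding Apair_eq_integral C2_def by linarith
  qed
  with pos that show ?thesis by blast
qed

lemma Apair_bounded:
  obtains C3 where "C3 > 0"
    "\<And>h g. H10 D h \<Longrightarrow> H10 D g \<Longrightarrow> \<bar>Apair D \<sigma> f h g\<bar> \<le> C3 * (normV D h + 1) * normV D g"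
proof -
  let ?M = "lebesgue_on D"
  define K where "K = 2 * (norm (vgrad \<sigma> 0))\<^sup>2 * measure ?M (space ?M)
    + 4 * L\<^sup>2 * (\<integral>x. (norm (wgrad D f x))\<^sup>2 \<partial>?M)"
  define C3 where "C3 = sqrt K + 2 * L + 1"
  have L: "L \<ge> 0" by (rule lipschitz_on_nonneg[OF lipschitz])
  have K: "K \<ge> 0" by (simp add: K_def)
  have pos: "C3 > 0" using K L by (simp add: C3_def add_nonneg_pos)
  have "\<bar>Apair D \<sigma> f h g\<bar> \<le> C3 * (normV D h + 1) * normV D g" if h: "H10 D h" and g: "H10 D g" for h g
  proof -
    let ?n = "normV D h"
    have n: "?n \<ge> 0" by (rule normV_nonneg[OF D_sets])
    have "(\<integral>x. (norm (wgrad D h x))\<^sup>2 \<partial>?M) \<le> ?n\<^sup>2"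
      unfolding normV_square[OF D_sets] by simp
    then have "4 * L\<^sup>2 * (\<integral>x. (norm (wgrad D h x))\<^sup>2 \<partial>?M) \<le> (2 * L * ?n)\<^sup>2"
      by (simp add: mult_left_mono power_mult_distrib)
    moreover have "(\<integral>x. (norm (flux h x))\<^sup>2 \<partial>?M) \<le> K + 4 * L\<^sup>2 * (\<integral>x. (norm (wgrad D h x))\<^sup>2 \<partial>?M)"
      using flux_L2(3)[OF h] by (simp add: K_def algebra_simps)
    ultimately have "sqrt (\<integral>x. (norm (flux h x))\<^sup>2 \<partial>?M) \<le> sqrt (K + (2 * L * ?n)\<^sup>2)"
      by (intro real_sqrt_le_mono) linarith
    also have "\<dots> \<le> sqrt K + sqrt ((2 * L * ?n)\<^sup>2)"
      by (rule sqrt_add_le_add_sqrt[OF K]) simp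
    also have "\<dots> = sqrt K + 2 * L * ?n"
      using L n by simp
    also have "\<dots> \<le> C3 * (?n + 1)"
      using K L n by (simp add: C3_def algebra_simps add_nonneg_nonneg)
    finally have flux_bound: "sqrt (\<integral>x. (norm (flux h x))\<^sup>2 \<partial>?M) \<le> C3 * (?n + 1)" .
    have "\<bar>Apair D \<sigma> f h g\<bar>
        \<le> sqrt (\<integral>x. (norm (flux h x))\<^sup>2 \<partial>?M) * sqrt (\<integral>x. (norm (wgrad D g x))\<^sup>2 \<partial>?M)"
      unfolding Apair_eq_integral abs_minus_cancel
      by (rule L2_Cauchy_Schwarz_inner(2)[OF flux_L2(1)[OF h] H10_lebesgue_on(3)[OF D_sets g]
            flux_L2(2)[OF h] H10_lebesgue_on(4)[OF D_sets g]])
    also have "\<dots> \<le> C3 * (?n + 1) * normV D g"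
      by (rule mult_mono[OF flux_bound L2_norm_wgrad_le_normV[OF D_sets]]) (use pos n in auto)
    finally show ?thesis .
  qed
  with pos that show ?thesis by blast
qed

end

theorem lemma3p4:
  fixes D :: "(real^'n::finite) set" and V :: "real \<Rightarrow> real"
    and \<sigma> :: "real^'n \<Rightarrow> real" and cm cp :: real
    and f :: "real^'n \<Rightarrow> real"
  assumes D: "open D" "bounded D" "connected D" "D \<noteq> {}" "lipschitz_boundary D"
    and V: "\<forall>x. V differentiable (at x)" "\<forall>x. deriv V differentiable (at x)"
      "continuous_on UNIV (deriv (deriv V))" "\<forall>x. V (- x) = V x"
      "cm > 0" "cp > 0" "\<forall>x. cm \<le> deriv (deriv V) x \<and> deriv (deriv V) x \<le> cp"
    and sig: "\<sigma> = surface_tension V"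
      "\<forall>u. \<sigma> differentiable (at u)" "continuous_on UNIV (vgrad \<sigma>)"
      "\<forall>u v. cm * (norm (u - v))\<^sup>2 \<le> (vgrad \<sigma> u - vgrad \<sigma> v) \<bullet> (u - v)
           \<and> (vgrad \<sigma> u - vgrad \<sigma> v) \<bullet> (u - v) \<le> cp * (norm (u - v))\<^sup>2"
    and f: "H10 D f"
  shows "(\<forall>h1\<in>Vsp D. \<forall>h2\<in>Vsp D.
            Apair D \<sigma> f h1 (\<lambda>x. h1 x - h2 x) - Apair D \<sigma> f h2 (\<lambda>x. h1 x - h2 x) \<le> 0)
       \<and> (\<forall>h\<in>Vsp D. \<forall>hs. (\<forall>n. hs n \<in> Vsp D) \<and> (\<lambda>n. normV D (\<lambda>x. hs n x - h x)) \<longlonglongrightarrow> 0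
            \<longrightarrow> (\<forall>g\<in>Vsp D. (\<lambda>n. Apair D \<sigma> f (hs n) g) \<longlonglongrightarrow> Apair D \<sigma> f h g))
       \<and> (\<exists>C1 C2 C3. C1 > 0 \<and> C2 > 0 \<and> C3 > 0 \<and>
            (\<forall>h\<in>Vsp D. Apair D \<sigma> f h h \<le> - C1 * (normV D h)\<^sup>2 + C2
               \<and> (\<forall>g\<in>Vsp D. \<bar>Apair D \<sigma> f h g\<bar> \<le> C3 * (normV D h + 1) * normV D g)))"
proof -
  have D_sets: "D \<in> sets lebesgue" using D(1) by (rule sets_lebesgue_if_open)
  have strong: "\<And>u v. cm * (norm (u - v))\<^sup>2 \<le> (vgrad \<sigma> u - vgrad \<sigma> v) \<bullet> (u - v)"
    using sig(4) by blast
  interpret \<sigma>: convex_upper_curvature \<sigma> cp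
  proof
    show "0 \<le> (vgrad \<sigma> u - vgrad \<sigma> v) \<bullet> (u - v)" for u v
      using strong[of u v] V(5) by (smt (verit) zero_le_mult_iff zero_le_power2)
  qed (use sig(2,4) V(6) in auto)
  interpret A: gradient_flux_operator D \<sigma> f "2 * cp"
    by (rule gradient_flux_operator.intro[OF D_sets finite_measure_lebesgue_on_bounded[OF D(2) D_sets]
          \<sigma>.gradient_lipschitz f])
  obtain R where R: "R > 0" "D \<subseteq> ball 0 R" using bounded_subset_ballD[OF D(2)] by blast
  obtain C1 C2 where C12: "C1 > 0" "C2 > 0" "\<And>h. H10 D h \<Longrightarrow> Apair D \<sigma> f h h \<le> - C1 * (normV D h)\<^sup>2 + C2"
    using A.Apair_coercive[OF V(5) strong R] by blast
  obtain C3 where C3: "C3 > 0"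
    "\<And>h g. H10 D h \<Longrightarrow> H10 D g \<Longrightarrow> \<bar>Apair D \<sigma> f h g\<bar> \<le> C3 * (normV D h + 1) * normV D g"
    using A.Apair_bounded by blast
  show ?thesis
    unfolding Vsp_def using A.Apair_monotone[OF \<sigma>.gradient_monotone] A.Apair_demicontinuous C12 C3
    by (intro conjI ballI allI impI exI[of _ C1] exI[of _ C2] exI[of _ C3]) auto
qed

end
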